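(* Under the Setup and the Unconditional asymptotic regime described in the context, $$\lim_{p\to\infty}\mathrm{Var}_{\boldsymbol\mu,S_n}(\hat\varepsilon^B)=\lim_{p\to\infty}\mathrm{Var}_{\boldsymbol\mu,S_n}(\varepsilon)=\lim_{p\to\infty}\mathrm{Cov}_{\boldsymbol\mu,S_n}(\varepsilon,\hat\varepsilon^B)=\lim_{p\to\infty}\mathrm{Var}_{\boldsymbol\mu,S_n}(\hat\varepsilon^B-\varepsilon)=0,$$ $\lim_{p\to\infty}\big|E_{\boldsymbol\mu,S_n}[\hat\varepsilon^B-\varepsilon]\big|=0$, and $$\lim_{p\to\infty}\mathrm{RMS}_{\boldsymbol\mu,S_n}[\hat\varepsilon^B]=\lim_{p\to\infty}\sqrt{E_{\boldsymbol\mu,S_n}[(\varepsilon-\hat\varepsilon^B)^2]}=0 .$$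
   Context: Setup. Fix $\alpha_0\in(0,1)$, $\alpha_1=1-\alpha_0$, and $c=\log\frac{1-\alpha_0}{\alpha_0}$. $\Phi$ is the standard normal CDF. For each dimension $p$ there is a known symmetric positive definite $p\times p$ matrix $\Sigma$, sample sizes $n_0,n_1$, prior means $\mathbf m_0,\mathbf m_1\in\mathbb R^p$ and prior certainty parameters $\nu_0,\nu_1>0$ (all depending on $p$; the index $p$ is suppressed). The class means are random: $\boldsymbol\mu_i\sim N(\mathbf m_i,\Sigma/\nu_i)$, $i=0,1$, independent; $\boldsymbol\mu=(\boldsymbol\mu_0,\boldsymbol\mu_1)$. Given $\boldsymbol\mu$, class $i$ has distribution $\Pi_i=N(\boldsymbol\mu_i,\Sigma)$, and the sample $S_n$ consists of $n_0$ i.i.d. points from $\Pi_0$ and, independently, $n_1$ i.i.d. points from $\Pi_1$; $\bar{\mathbf x}_0,\bar{\mathbf x}_1$ are the class sample means. The LDA classifier assigns $\mathbf x$ to class 1 if $W(\mathbf x)\le c$ and to class 0 otherwise, where $W(\mathbf x)=(\mathbf x-\frac{\bar{\mathbf x}_0+\bar{\mathbf x}_1}{2})^T\Sigma^{-1}(\bar{\mathbf x}_0-\bar{\mathbf x}_1)$. Let $\hat\delta^2=(\bar{\mathbf x}_0-\bar{\mathbf x}_1)^T\Sigma^{-1}(\bar{\mathbf x}_0-\bar{\mathbf x}_1)$. The true error is $\varepsilon=\alpha_0\varepsilon_0+\alpha_1\varepsilon_1$ with $\varepsilon_i=\Phi\Big(\frac{(-1)^{i+1}(\boldsymbol\mu_i-\frac{\bar{\mathbf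 x}_0+\bar{\mathbf x}_1}{2})^T\Sigma^{-1}(\bar{\mathbf x}_0-\bar{\mathbf x}_1)+(-1)^i c}{\hat\delta}\Big)$. The Bayesian MMSE error estimator is $\hat\varepsilon^B=\alpha_0\hat\varepsilon^B_0+\alpha_1\hat\varepsilon^B_1$ with $\hat\varepsilon_i^B=\Phi\Big((-1)^i\frac{-(\mathbf m_i^*-\frac{\bar{\mathbf x}_0+\bar{\mathbf x}_1}{2})^T\Sigma^{-1}(\bar{\mathbf x}_0-\bar{\mathbf x}_1)+c}{\hat\delta}\sqrt{\frac{\nu_i^*}{\nu_i^*+1}}\Big)$, where $\mathbf m_i^*=\frac{n_i\bar{\mathbf x}_i+\nu_i\mathbf m_i}{n_i+\nu_i}$ and $\nu_i^*=n_i+\nu_i$. Notation: $\Delta^2_{\mathbf m}=(\mathbf m_0-\mathbf m_1)^T\Sigma^{-1}(\mathbf m_0-\mathbf m_1)$, and $\bar\Delta^2_{\mathbf m}$ its limit as $p\to\infty$. Unconditional asymptotic regime. Expectations $E_{\boldsymbol\mu,S_n}$ are over both $\boldsymbol\mu$ and the sample. As $p\to\infty$: $n_0,n_1,\nu_0,\nu_1\to\infty$, $p/n_i\to J_i\in[0,\infty)$, $\nu_i/n_i\to\gamma_i\in(0,\infty)$, and for all $i,j\in\{0,1\}$, $\mathbf m_i^T\Sigma^{-1}\mathbf m_j$ converges to a finite limit. It is assumed that $F=\bar\Delta^2_{\mathbf m}+J_0+J_1+\frac{J_0}{\gamma_0}+\frac{J_1}{\gamma_1}>0$. $\lim_{p\to\infty}$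 denotes the limit along this regime. *)

theory Defs
  imports "HOL-Probability.Probability"
begin

text \<open>Vectors in R^p are represented as functions nat => real, only the
coordinates k < p being relevant; p x p matrices as nat => nat => real.\<close>

definition qf :: "nat \<Rightarrow> (nat \<Rightarrow> nat \<Rightarrow> real) \<Rightarrow> (nat \<Rightarrow> real) \<Rightarrow> (nat \<Rightarrow> real) \<Rightarrow> real" where
  "qf p A x y = (\<Sum>k<p. \<Sum>l<p. x k * A k l * y l)"

definition Phi :: "real \<Rightarrow> real" where
  "Phi x = measure (density lborel std_normal_density) {..x}"

text \<open>Multivariate normal N(m,S) on R^p (Cramer-Wold definition): the random
vector is measurable and every nontrivial linear combination is univariate
normal with mean a^T m and variance a^T S a.\<close>
definition mvn :: "'a measure \<Rightarrow> nat \<Rightarrow> ('a \<Rightarrow> nat \<Rightarrow> real) \<Rightarrow> (nat \<Rightarrow> real)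
    \<Rightarrow> (nat \<Rightarrow> nat \<Rightarrow> real) \<Rightarrow> bool" where
  "mvn M p Y m S \<longleftrightarrow> Y \<in> measurable M (PiM {..<p} (\<lambda>_. borel)) \<and>
     (\<forall>a. (\<exists>k<p. a k \<noteq> 0) \<longrightarrow>
        distributed M lborel (\<lambda>\<omega>. \<Sum>k<p. a k * Y \<omega> k)
          (normal_density (\<Sum>k<p. a k * m k) (sqrt (qf p S a a))))"

text \<open>Index type for the independent random vectors of the model:
the class means mu_i and the noises x_ij - mu_i.\<close>
datatype rvidx = MuI nat | NoiseI nat nat

definition smean :: "nat \<Rightarrow> (nat \<Rightarrow> nat \<Rightarrow> real) \<Rightarrow> nat \<Rightarrow> real" where
  "smean n X = (\<lambda>k. (\<Sum>j<n. X j k) / real n)"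

definition true_err_i :: "nat \<Rightarrow> (nat \<Rightarrow> nat \<Rightarrow> real) \<Rightarrow> real \<Rightarrow> nat
    \<Rightarrow> (nat \<Rightarrow> real) \<Rightarrow> (nat \<Rightarrow> real) \<Rightarrow> (nat \<Rightarrow> real) \<Rightarrow> real" where
  "true_err_i p Sinv c i mu x0 x1 =
     Phi (((-1) ^ (i + 1) * qf p Sinv (\<lambda>k. mu k - (x0 k + x1 k) / 2) (\<lambda>k. x0 k - x1 k)
           + (-1) ^ i * c) / sqrt (qf p Sinv (\<lambda>k. x0 k - x1 k) (\<lambda>k. x0 k - x1 k)))"

definition true_err :: "nat \<Rightarrow> (nat \<Rightarrow> nat \<Rightarrow> real) \<Rightarrow> real \<Rightarrow> (nat \<Rightarrow> real) \<Rightarrow> (nat \<Rightarrow> real)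
    \<Rightarrow> (nat \<Rightarrow> real) \<Rightarrow> (nat \<Rightarrow> real) \<Rightarrow> real" where
  "true_err p Sinv a0 mu0 mu1 x0 x1 =
     (let c = ln ((1 - a0) / a0) in
      a0 * true_err_i p Sinv c 0 mu0 x0 x1 + (1 - a0) * true_err_i p Sinv c 1 mu1 x0 x1)"

text \<open>Bayesian MMSE class-i error estimator; xi is the class-i sample mean,
n the class-i sample size, nu and m the class-i prior parameters.\<close>
definition bee_i :: "nat \<Rightarrow> (nat \<Rightarrow> nat \<Rightarrow> real) \<Rightarrow> real \<Rightarrow> nat \<Rightarrow> nat \<Rightarrow> real
    \<Rightarrow> (nat \<Rightarrow> real) \<Rightarrow> (nat \<Rightarrow> real) \<Rightarrow> (nat \<Rightarrow> real) \<Rightarrow> (nat \<Rightarrow> real) \<Rightarrow> real" where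
  "bee_i p Sinv c i n nu m xi x0 x1 =
     (let mstar = (\<lambda>k. (real n * xi k + nu * m k) / (real n + nu));
          nustar = real n + nu
      in Phi ((-1) ^ i *
           ((- qf p Sinv (\<lambda>k. mstar k - (x0 k + x1 k) / 2) (\<lambda>k. x0 k - x1 k) + c)
             / sqrt (qf p Sinv (\<lambda>k. x0 k - x1 k) (\<lambda>k. x0 k - x1 k)))
           * sqrt (nustar / (nustar + 1))))"

definition bee :: "nat \<Rightarrow> (nat \<Rightarrow> nat \<Rightarrow> real) \<Rightarrow> real \<Rightarrow> nat \<Rightarrow> nat \<Rightarrow> real \<Rightarrow> real
    \<Rightarrow> (nat \<Rightarrow> real) \<Rightarrow> (nat \<Rightarrow> real) \<Rightarrow> (nat \<Rightarrow> real) \<Rightarrow> (nat \<Rightarrow> real) \<Rightarrow> real" where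
  "bee p Sinv a0 n0 n1 nu0 nu1 m0 m1 x0 x1 =
     (let c = ln ((1 - a0) / a0) in
      a0 * bee_i p Sinv c 0 n0 nu0 m0 x0 x0 x1 + (1 - a0) * bee_i p Sinv c 1 n1 nu1 m1 x1 x0 x1)"

definition covariance :: "'a measure \<Rightarrow> ('a \<Rightarrow> real) \<Rightarrow> ('a \<Rightarrow> real) \<Rightarrow> real" where
  "covariance M X Y = integral\<^sup>L M (\<lambda>\<omega>. (X \<omega> - integral\<^sup>L M X) * (Y \<omega> - integral\<^sup>L M Y))"

end

theory Submission
  imports Defs
begin

text \<open>Write the class-\<open>i\<close> sample mean as \<open>x\<^sub>i = m\<^sub>i + W\<^sub>i + Z\<^sub>i\<close>, where \<open>W\<^sub>i = \<mu>\<^sub>i - m\<^sub>i \<sim> N(0, \<Sigma>/\<nu>\<^sub>i)\<close> and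
  \<open>Z\<^sub>i \<sim> N(0, \<Sigma>/n\<^sub>i)\<close> is the averaged noise; \<open>W\<^sub>0, W\<^sub>1, Z\<^sub>0, Z\<^sub>1\<close> are independent.  Every quadratic
  form entering \<open>\<epsilon>\<close> and \<open>\<epsilon>\<^sup>B\<close> is a bilinear combination of the pairings of \<open>m\<^sub>0, m\<^sub>1, W\<^sub>0, W\<^sub>1, Z\<^sub>0, Z\<^sub>1\<close>
  in the \<open>\<Sigma>\<^sup>-\<^sup>1\<close>-inner product.  For \<open>G \<sim> N(0, \<Sigma>/t)\<close> and an independent \<open>H \<sim> N(0, \<Sigma>/s)\<close>, Isserlis'
  theorem gives \<open>E (G'\<Sigma>\<^sup>-\<^sup>1G - p/t)\<^sup>2 = 2p/t\<^sup>2\<close>, \<open>E (a'\<Sigma>\<^sup>-\<^sup>1G)\<^sup>2 = a'\<Sigma>\<^sup>-\<^sup>1a/t\<close> and \<open>E (G'\<Sigma>\<^sup>-\<^sup>1H)\<^sup>2 = p/(ts)\<close>, so by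
  Chebyshev every pairing converges in probability to a constant.  By continuous mapping, \<open>\<epsilon>\<close> and
  \<open>\<epsilon>\<^sup>B\<close> then converge in probability to the same constant (the shrinkage factor \<open>\<nu>\<^sup>*/(\<nu>\<^sup>*+1)\<close> tends
  to 1 and the posterior means \<open>m\<^sub>i\<^sup>*\<close> pair with \<open>x\<^sub>0 - x\<^sub>1\<close> like \<open>\<mu>\<^sub>i\<close> in the limit).  Both errors lie in
  \<open>[0,1]\<close>, so this is convergence in \<open>L\<^sup>2\<close>, which controls all the moments in the statement.\<close>

section \<open>Bilinear forms\<close>

lemma qf_add_left: "qf P A (\<lambda>k. x k + y k) z = qf P A x z + qf P A y z"
  by (simp add: qf_def algebra_simps sum.distrib)

lemma qf_add_right: "qf P A z (\<lambda>k. x k + y k) = qf P A z x + qf P A z y"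
  by (simp add: qf_def algebra_simps sum.distrib)

lemma qf_diff_left: "qf P A (\<lambda>k. x k - y k) z = qf P A x z - qf P A y z"
  by (simp add: qf_def algebra_simps sum_subtractf)

lemma qf_diff_right: "qf P A z (\<lambda>k. x k - y k) = qf P A z x - qf P A z y"
  by (simp add: qf_def algebra_simps sum_subtractf)

lemma qf_cmult_left: "qf P A (\<lambda>k. c * x k) z = c * qf P A x z"
  by (simp add: qf_def sum_distrib_left algebra_simps)

lemma qf_cmult_right: "qf P A z (\<lambda>k. c * x k) = c * qf P A z x"
  by (simp add: qf_def sum_distrib_left algebra_simps)

lemma qf_divide_matrix: "qf P (\<lambda>k l. A k l / t) x y = qf P A x y / t"
  by (simp add: qf_def sum_divide_distrib)

lemma qf_cong:
  "(\<And>k. k < P \<Longrightarrow> x k = x' k) \<Longrightarrow> (\<And>k. k < P \<Longrightarrow> y k = y' k) \<Longrightarrow> qf P A x y = qf P A x' y'"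
  by (simp add: qf_def)

lemma qf_commute: "(\<And>k l. k < P \<Longrightarrow> l < P \<Longrightarrow> A k l = A l k) \<Longrightarrow> qf P A x y = qf P A y x"
  unfolding qf_def by (subst sum.swap) (auto intro!: sum.cong simp: mult.commute)

lemma qf_sum_left: "qf P A (\<lambda>k. \<Sum>i<(N::nat). a i * v i k) y = (\<Sum>i<N. a i * qf P A (v i) y)"
  by (induction N) (simp_all add: qf_add_left qf_cmult_left qf_def)

lemma qf_sum_right: "qf P A y (\<lambda>k. \<Sum>i<(N::nat). a i * v i k) = (\<Sum>i<N. a i * qf P A y (v i))"
  by (induction N) (simp_all add: qf_add_right qf_cmult_right qf_def)

lemma qf_sum_sum:
  "qf P A (\<lambda>k. \<Sum>i<(N::nat). a i * v i k) (\<lambda>k. \<Sum>j<N. b j * w j k)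
     = (\<Sum>i<N. \<Sum>j<N. a i * b j * qf P A (v i) (w j))"
  by (simp add: qf_sum_left qf_sum_right sum_distrib_left mult.assoc)

lemma qf_measurable:
  "(\<And>k. k < P \<Longrightarrow> (\<lambda>\<omega>. x \<omega> k) \<in> borel_measurable N) \<Longrightarrow>
   (\<And>k. k < P \<Longrightarrow> (\<lambda>\<omega>. y \<omega> k) \<in> borel_measurable N) \<Longrightarrow>
   (\<lambda>\<omega>. qf P A (x \<omega>) (y \<omega>)) \<in> borel_measurable N"
  unfolding qf_def by (intro borel_measurable_sum borel_measurable_times measurable_const) auto

definition dot :: "nat \<Rightarrow> (nat \<Rightarrow> real) \<Rightarrow> (nat \<Rightarrow> real) \<Rightarrow> real" where
  "dot P b y = (\<Sum>k<P. b k * y k)"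

definition unit_vec :: "nat \<Rightarrow> nat \<Rightarrow> real" where
  "unit_vec k = (\<lambda>j. if j = k then 1 else 0)"

lemma dot_add_left: "dot P (\<lambda>k. x k + y k) v = dot P x v + dot P y v"
  by (simp add: dot_def algebra_simps sum.distrib)

lemma dot_diff_left: "dot P (\<lambda>k. x k - y k) v = dot P x v - dot P y v"
  by (simp add: dot_def algebra_simps sum_subtractf)

lemma dot_sum4_left: "dot P (\<lambda>k. b1 k + e2 * b2 k + e3 * b3 k + e4 * b4 k) y
   = dot P b1 y + e2 * dot P b2 y + e3 * dot P b3 y + e4 * dot P b4 y"
  by (simp add: dot_def sum.distrib sum_distrib_left algebra_simps)

lemma dot_measurable [measurable]: "(\<lambda>y. dot P b y) \<in> borel_measurable (PiM {..<P} (\<lambda>_. borel))"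
  unfolding dot_def by measurable

lemma sum_unit_vec_mult: "k < P \<Longrightarrow> (\<Sum>j<P. unit_vec k j * f j) = (f k :: real)"
  by (simp add: unit_vec_def if_distrib[of "\<lambda>x. x * _"] cong: if_cong)

lemma sum_mult_unit_vec: "k < P \<Longrightarrow> (\<Sum>j<P. f j * unit_vec k j) = (f k :: real)"
  by (simp add: unit_vec_def if_distrib[of "\<lambda>x. _ * x"] cong: if_cong)

lemma dot_unit_vec: "k < P \<Longrightarrow> dot P (unit_vec k) y = y k"
  unfolding dot_def by (rule sum_unit_vec_mult)

lemma qf_unit_vec_left: "k < P \<Longrightarrow> qf P A (unit_vec k) y = (\<Sum>l<P. A k l * y l)"
  unfolding qf_def by (subst sum.swap) (simp add: mult.assoc sum_unit_vec_mult)

lemma qf_unit_vec_right: "l < P \<Longrightarrow> qf P A x (unit_vec l) = (\<Sum>k<P. x k * A k l)"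
  unfolding qf_def by (simp add: sum_mult_unit_vec)

lemma qf_eq_sum_dot: "qf P S x y = (\<Sum>k<P. x k * dot P (\<lambda>l. S k l) y)"
  by (simp add: qf_def dot_def sum_distrib_left mult.assoc)

locale inverse_matrices =
  fixes P :: nat and Sg S :: "nat \<Rightarrow> nat \<Rightarrow> real"
  assumes Sg_symmetric: "\<And>k l. k < P \<Longrightarrow> l < P \<Longrightarrow> Sg k l = Sg l k"
    and right_inverse: "\<And>k l. k < P \<Longrightarrow> l < P \<Longrightarrow> (\<Sum>j<P. Sg k j * S j l) = (if k = l then 1 else 0)"
    and left_inverse: "\<And>k l. k < P \<Longrightarrow> l < P \<Longrightarrow> (\<Sum>j<P. S k j * Sg j l) = (if k = l then 1 else 0)"
begin

lemma S_symmetric: "k < P \<Longrightarrow> l < P \<Longrightarrow> S k l = S l k"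
proof -
  assume k: "k < P" and l: "l < P"
  have "S k l = (\<Sum>j<P. unit_vec k j * S j l)"
    using k by (simp add: sum_unit_vec_mult)
  also have "\<dots> = (\<Sum>j<P. (\<Sum>i<P. S i k * Sg i j) * S j l)"
  proof (intro sum.cong refl)
    fix j assume j: "j \<in> {..<P}"
    have "(\<Sum>i<P. S i k * Sg i j) = (\<Sum>i<P. Sg j i * S i k)"
      using j by (intro sum.cong refl) (simp add: Sg_symmetric mult.commute)
    then show "unit_vec k j * S j l = (\<Sum>i<P. S i k * Sg i j) * S j l"
      using j k by (simp add: right_inverse unit_vec_def)
  qed
  also have "\<dots> = (\<Sum>i<P. S i k * (\<Sum>j<P. Sg i j * S j l))"
    by (simp add: sum_distrib_left sum_distrib_right mult.assoc) (rule sum.swap)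
  also have "\<dots> = (\<Sum>i<P. S i k * unit_vec l i)"
    by (intro sum.cong refl) (simp add: right_inverse l unit_vec_def)
  also have "\<dots> = S l k" using l by (simp add: sum_mult_unit_vec)
  finally show ?thesis .
qed

lemma qf_rows: "k < P \<Longrightarrow> l < P \<Longrightarrow> qf P Sg (\<lambda>j. S k j) (\<lambda>j. S l j) = S k l"
proof -
  assume k: "k < P" and l: "l < P"
  have "qf P Sg (\<lambda>j. S k j) (\<lambda>j. S l j) = (\<Sum>a<P. S k a * (\<Sum>b<P. Sg a b * S b l))"
    unfolding qf_def by (intro sum.cong refl) (simp add: sum_distrib_left mult.assoc S_symmetric l)
  also have "\<dots> = (\<Sum>a<P. S k a * unit_vec l a)"
    by (intro sum.cong refl) (simp add: right_inverse l unit_vec_def)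
  also have "\<dots> = S k l" using l by (simp add: sum_mult_unit_vec)
  finally show ?thesis .
qed

lemma trace_product: "(\<Sum>k<P. \<Sum>l<P. Sg k l * S k l) = real P"
proof -
  have "(\<Sum>k<P. \<Sum>l<P. Sg k l * S k l) = (\<Sum>k<P. \<Sum>l<P. Sg k l * S l k)"
    by (intro sum.cong refl) (simp add: S_symmetric)
  also have "\<dots> = (\<Sum>k<P. (1::real))" by (intro sum.cong refl) (simp add: right_inverse)
  finally show ?thesis by simp
qed

end

section \<open>Moments of Gaussian vectors\<close>

lemma polarization4:
  "(x1::real) * x2 * x3 * x4 = ((x1+x2+x3+x4)^4 - (x1+x2+x3-x4)^4 - (x1+x2-x3+x4)^4 + (x1+x2-x3-x4)^4
     - (x1-x2+x3+x4)^4 + (x1-x2+x3-x4)^4 + (x1-x2-x3+x4)^4 - (x1-x2-x3-x4)^4) / 192"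
  by (simp add: field_simps power_def)

lemma polarization2: "(x1::real) * x2 = ((x1+x2)^2 - (x1-x2)^2) / 4"
  by (simp add: field_simps power2_eq_square)

lemma (in prob_space) normal_moments:
  assumes D: "distributed M lborel X (normal_density 0 \<sigma>)" and \<sigma>: "0 < \<sigma>"
  shows "integrable M (\<lambda>x. X x ^ k)"
    and "expectation (\<lambda>x. X x ^ (2*k)) = fact (2*k) / ((2/\<sigma>\<^sup>2)^k * fact k)"
proof -
  have "integrable lborel (\<lambda>x. normal_density 0 \<sigma> x * x ^ k)"
    using integrable_normal_moment[OF \<sigma>, of 0 k] by simp
  then show "integrable M (\<lambda>x. X x ^ k)"
    using distributed_integrable[OF D, of "\<lambda>x. x ^ k"] by simp
  show "expectation (\<lambda>x. X x ^ (2*k)) = fact (2*k) / ((2/\<sigma>\<^sup>2)^k * fact k)"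
    using integral_normal_moment_even[OF \<sigma>, of 0 k] distributed_integral[OF D, of "\<lambda>x. x ^ (2*k)"]
    by simp
qed

locale centered_gaussian = prob_space M for M :: "'a measure" +
  fixes P :: nat and Y :: "'a \<Rightarrow> nat \<Rightarrow> real" and C :: "nat \<Rightarrow> nat \<Rightarrow> real"
  assumes mvn: "mvn M P Y (\<lambda>_. 0) C"
    and C_symmetric: "\<And>k l. k < P \<Longrightarrow> l < P \<Longrightarrow> C k l = C l k"
    and C_pos_def: "\<And>b. (\<exists>k<P. b k \<noteq> 0) \<Longrightarrow> qf P C b b > 0"
begin

lemma measurable_component [measurable]: "k < P \<Longrightarrow> (\<lambda>\<omega>. Y \<omega> k) \<in> borel_measurable M"
proof -
  assume "k < P"
  have "Y \<in> measurable M (PiM {..<P} (\<lambda>_. borel))" using mvn by (simp add: mvn_def)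
  from measurable_compose[OF this measurable_component_singleton[of k]] \<open>k < P\<close> show ?thesis by simp
qed

lemma qf_C_commute: "qf P C x y = qf P C y x"
  by (rule qf_commute) (simp add: C_symmetric)

lemma distributed_dot: "(\<exists>k<P. b k \<noteq> 0) \<Longrightarrow>
   distributed M lborel (\<lambda>\<omega>. dot P b (Y \<omega>)) (normal_density 0 (sqrt (qf P C b b)))"
  using mvn unfolding mvn_def dot_def by simp

lemma dot_degenerate: "\<forall>k<P. b k = 0 \<Longrightarrow> dot P b (Y \<omega>) = 0 \<and> qf P C b b = 0"
  by (simp add: dot_def qf_def)

lemma integrable_dot_power: "integrable M (\<lambda>\<omega>. dot P b (Y \<omega>) ^ k)"
proof (cases "\<exists>k<P. b k \<noteq> 0")
  case True
  then show ?thesis using normal_moments(1)[OF distributed_dot[OF True]] C_pos_def[OF True] by simp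
qed (use dot_degenerate[of b] in simp)

lemma expectation_dot_square: "expectation (\<lambda>\<omega>. dot P b (Y \<omega>) ^ 2) = qf P C b b"
proof (cases "\<exists>k<P. b k \<noteq> 0")
  case True
  have "expectation (\<lambda>\<omega>. dot P b (Y \<omega>) ^ (2*1)) = fact 2 / ((2/(sqrt (qf P C b b))\<^sup>2)^1 * fact 1)"
    using normal_moments(2)[OF distributed_dot[OF True], of 1] C_pos_def[OF True] by simp
  then show ?thesis using C_pos_def[OF True] by simp
qed (use dot_degenerate[of b] in simp)

lemma expectation_dot_power4: "expectation (\<lambda>\<omega>. dot P b (Y \<omega>) ^ 4) = 3 * (qf P C b b)^2"
proof (cases "\<exists>k<P. b k \<noteq> 0")
  case True
  have "expectation (\<lambda>\<omega>. dot P b (Y \<omega>) ^ (2*2)) = fact 4 / ((2/(sqrt (qf P C b b))\<^sup>2)^2 * fact 2)"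
    using normal_moments(2)[OF distributed_dot[OF True], of 2] C_pos_def[OF True]
    by (simp add: numeral_eq_Suc)
  then show ?thesis using C_pos_def[OF True] by (simp add: fact_numeral power2_eq_square field_simps)
qed (use dot_degenerate[of b] in simp)

lemma qf_sum4:
  "qf P C (\<lambda>k. b1 k + e2 * b2 k + e3 * b3 k + e4 * b4 k) (\<lambda>k. b1 k + e2 * b2 k + e3 * b3 k + e4 * b4 k)
   = qf P C b1 b1 + e2*e2*qf P C b2 b2 + e3*e3*qf P C b3 b3 + e4*e4*qf P C b4 b4
     + 2*e2*qf P C b1 b2 + 2*e3*qf P C b1 b3 + 2*e4*qf P C b1 b4
     + 2*e2*e3*qf P C b2 b3 + 2*e2*e4*qf P C b2 b4 + 2*e3*e4*qf P C b3 b4"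
  by (simp add: qf_add_left qf_add_right qf_cmult_left qf_cmult_right algebra_simps
      qf_C_commute[of b2 b1] qf_C_commute[of b3 b1] qf_C_commute[of b4 b1]
      qf_C_commute[of b3 b2] qf_C_commute[of b4 b2] qf_C_commute[of b4 b3])

text \<open>Isserlis' theorem, derived from the fourth moments of the 8 sign combinations
  \<open>b\<^sub>1 \<plusminus> b\<^sub>2 \<plusminus> b\<^sub>3 \<plusminus> b\<^sub>4\<close> by polarization.\<close>

lemma isserlis:
  defines "L \<equiv> \<lambda>b \<omega>. dot P b (Y \<omega>)"
  shows "integrable M (\<lambda>\<omega>. L b1 \<omega> * L b2 \<omega> * L b3 \<omega> * L b4 \<omega>)"
    and "expectation (\<lambda>\<omega>. L b1 \<omega> * L b2 \<omega> * L b3 \<omega> * L b4 \<omega>)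
       = qf P C b1 b2 * qf P C b3 b4 + qf P C b1 b3 * qf P C b2 b4 + qf P C b1 b4 * qf P C b2 b3"
proof -
  define v where "v = (\<lambda>e2 e3 e4 k. b1 k + e2 * b2 k + e3 * b3 k + e4 * b4 k)"
  define F where "F = (\<lambda>e2 e3 e4 \<omega>. L (v e2 e3 e4) \<omega> ^ 4)"
  have F_integrable: "integrable M (F e2 e3 e4)" for e2 e3 e4
    unfolding F_def L_def by (rule integrable_dot_power)
  have F_expectation: "expectation (F e2 e3 e4) = 3 * (qf P C (v e2 e3 e4) (v e2 e3 e4))^2" for e2 e3 e4
    unfolding F_def L_def by (rule expectation_dot_power4)
  have eq: "(\<lambda>\<omega>. L b1 \<omega> * L b2 \<omega> * L b3 \<omega> * L b4 \<omega>) =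
    (\<lambda>\<omega>. (F 1 1 1 \<omega> - F 1 1 (-1) \<omega> - F 1 (-1) 1 \<omega> + F 1 (-1) (-1) \<omega>
          - F (-1) 1 1 \<omega> + F (-1) 1 (-1) \<omega> + F (-1) (-1) 1 \<omega> - F (-1) (-1) (-1) \<omega>) / 192)"
    by (rule ext, subst polarization4) (simp add: F_def v_def L_def dot_sum4_left)
  show "integrable M (\<lambda>\<omega>. L b1 \<omega> * L b2 \<omega> * L b3 \<omega> * L b4 \<omega>)"
    unfolding eq using F_integrable by simp
  have "expectation (\<lambda>\<omega>. L b1 \<omega> * L b2 \<omega> * L b3 \<omega> * L b4 \<omega>) =
     (expectation (F 1 1 1) - expectation (F 1 1 (-1)) - expectation (F 1 (-1) 1)
      + expectation (F 1 (-1) (-1)) - expectation (F (-1) 1 1) + expectation (F (-1) 1 (-1))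
      + expectation (F (-1) (-1) 1) - expectation (F (-1) (-1) (-1))) / 192"
    unfolding eq using F_integrable by simp
  also have "\<dots> = qf P C b1 b2 * qf P C b3 b4 + qf P C b1 b3 * qf P C b2 b4 + qf P C b1 b4 * qf P C b2 b3"
    unfolding F_expectation v_def qf_sum4 by (simp add: field_simps power2_eq_square)
  finally show "expectation (\<lambda>\<omega>. L b1 \<omega> * L b2 \<omega> * L b3 \<omega> * L b4 \<omega>)
       = qf P C b1 b2 * qf P C b3 b4 + qf P C b1 b3 * qf P C b2 b4 + qf P C b1 b4 * qf P C b2 b3" .
qed

lemma covariance_dot:
  defines "L \<equiv> \<lambda>b \<omega>. dot P b (Y \<omega>)"
  shows "integrable M (\<lambda>\<omega>. L b1 \<omega> * L b2 \<omega>)"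
    and "expectation (\<lambda>\<omega>. L b1 \<omega> * L b2 \<omega>) = qf P C b1 b2"
proof -
  have eq: "(\<lambda>\<omega>. L b1 \<omega> * L b2 \<omega>) =
      (\<lambda>\<omega>. (L (\<lambda>k. b1 k + b2 k) \<omega> ^ 2 - L (\<lambda>k. b1 k - b2 k) \<omega> ^ 2) / 4)"
    by (rule ext, subst polarization2) (simp add: L_def dot_add_left dot_diff_left)
  have square_integrable: "integrable M (\<lambda>\<omega>. L b \<omega> ^ 2)" for b
    unfolding L_def by (rule integrable_dot_power)
  show "integrable M (\<lambda>\<omega>. L b1 \<omega> * L b2 \<omega>)" unfolding eq using square_integrable by simp
  show "expectation (\<lambda>\<omega>. L b1 \<omega> * L b2 \<omega>) = qf P C b1 b2"
    unfolding eq using square_integrable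
    by (simp add: L_def expectation_dot_square qf_add_left qf_add_right qf_diff_left qf_diff_right
        qf_C_commute[of b2 b1])
qed

end

locale scaled_gaussian = centered_gaussian M P Y C + inverse_matrices P Sg S
  for M :: "'a measure" and P Y C Sg S +
  fixes t :: real
  assumes t_pos: "t > 0" and C_eq: "C = (\<lambda>k l. Sg k l / t)"
begin

lemma cov_unit_row: "k < P \<Longrightarrow> l < P \<Longrightarrow> qf P C (unit_vec k) (\<lambda>j. S l j) = (if k = l then 1 else 0) / t"
proof -
  assume k: "k < P" and l: "l < P"
  have "qf P C (unit_vec k) (\<lambda>j. S l j) = (\<Sum>j<P. Sg k j * S j l) / t"
    unfolding qf_unit_vec_left[OF k] C_eq by (simp add: sum_divide_distrib S_symmetric l)
  then show ?thesis using k l by (simp add: right_inverse)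
qed

lemma cov_row_unit: "k < P \<Longrightarrow> l < P \<Longrightarrow> qf P C (\<lambda>j. S k j) (unit_vec l) = (if k = l then 1 else 0) / t"
proof -
  assume k: "k < P" and l: "l < P"
  have "qf P C (\<lambda>j. S k j) (unit_vec l) = (\<Sum>j<P. S k j * Sg j l) / t"
    unfolding qf_unit_vec_right[OF l] C_eq by (simp add: sum_divide_distrib)
  then show ?thesis using k l by (simp add: left_inverse)
qed

lemma cov_unit_unit: "k < P \<Longrightarrow> l < P \<Longrightarrow> qf P C (unit_vec k) (unit_vec l) = Sg k l / t"
  by (simp only: qf_unit_vec_left) (simp add: C_eq sum_divide_distrib[symmetric] sum_mult_unit_vec)

lemma cov_row_row: "k < P \<Longrightarrow> l < P \<Longrightarrow> qf P C (\<lambda>j. S k j) (\<lambda>j. S l j) = S k l / t"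
  by (simp add: C_eq qf_divide_matrix qf_rows)

abbreviation L :: "(nat \<Rightarrow> real) \<Rightarrow> 'a \<Rightarrow> real" where
  "L b \<omega> \<equiv> dot P b (Y \<omega>)"

lemma qf_self_eq_sum: "qf P S (Y \<omega>) (Y \<omega>) = (\<Sum>k<P. L (unit_vec k) \<omega> * L (\<lambda>j. S k j) \<omega>)"
  unfolding qf_eq_sum_dot by (intro sum.cong refl) (simp add: dot_unit_vec)

lemma integrable_qf_self: "integrable M (\<lambda>\<omega>. qf P S (Y \<omega>) (Y \<omega>))"
  unfolding qf_self_eq_sum by (intro Bochner_Integration.integrable_sum covariance_dot(1))

lemma expectation_qf_self: "expectation (\<lambda>\<omega>. qf P S (Y \<omega>) (Y \<omega>)) = real P / t"
proof -
  have "expectation (\<lambda>\<omega>. qf P S (Y \<omega>) (Y \<omega>))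
      = (\<Sum>k<P. expectation (\<lambda>\<omega>. L (unit_vec k) \<omega> * L (\<lambda>j. S k j) \<omega>))"
    unfolding qf_self_eq_sum by (intro Bochner_Integration.integral_sum covariance_dot(1))
  also have "\<dots> = (\<Sum>k<P. 1 / t)"
    by (intro sum.cong refl) (simp add: covariance_dot(2) cov_unit_row)
  finally show ?thesis by simp
qed

lemma qf_self_square_eq_sum: "(qf P S (Y \<omega>) (Y \<omega>))^2 =
   (\<Sum>k<P. \<Sum>l<P. L (unit_vec k) \<omega> * L (\<lambda>j. S k j) \<omega> * L (unit_vec l) \<omega> * L (\<lambda>j. S l j) \<omega>)"
  unfolding qf_self_eq_sum power2_eq_square sum_product by (simp add: mult.assoc)

lemma integrable_qf_self_square: "integrable M (\<lambda>\<omega>. (qf P S (Y \<omega>) (Y \<omega>))^2)"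
  unfolding qf_self_square_eq_sum by (intro Bochner_Integration.integrable_sum isserlis(1))

lemma expectation_qf_self_square:
  "expectation (\<lambda>\<omega>. (qf P S (Y \<omega>) (Y \<omega>))^2) = (real P / t)^2 + 2 * real P / t^2"
proof -
  have "expectation (\<lambda>\<omega>. (qf P S (Y \<omega>) (Y \<omega>))^2) = (\<Sum>k<P. \<Sum>l<P.
      expectation (\<lambda>\<omega>. L (unit_vec k) \<omega> * L (\<lambda>j. S k j) \<omega> * L (unit_vec l) \<omega> * L (\<lambda>j. S l j) \<omega>))"
    unfolding qf_self_square_eq_sum
    by (simp add: Bochner_Integration.integral_sum Bochner_Integration.integrable_sum isserlis(1))
  also have "\<dots> = (\<Sum>k<P. \<Sum>l<P. 1/t^2 + (Sg k l * S k l) / t^2 + (if k = l then 1 else 0) / t^2)"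
    by (intro sum.cong refl)
      (simp add: isserlis(2) cov_unit_row cov_row_unit cov_unit_unit cov_row_row power2_eq_square)
  also have "\<dots> = (\<Sum>k<P. real P / t^2 + (\<Sum>l<P. Sg k l * S k l) / t^2 + 1 / t^2)"
    by (intro sum.cong refl) (simp add: sum.distrib sum_divide_distrib[symmetric])
  also have "\<dots> = real P * real P / t^2 + (\<Sum>k<P. \<Sum>l<P. Sg k l * S k l) / t^2 + real P / t^2"
    by (simp add: sum.distrib sum_divide_distrib[symmetric])
  also have "\<dots> = (real P / t)^2 + 2 * real P / t^2"
    using trace_product by (simp add: power2_eq_square field_simps)
  finally show ?thesis .
qed

lemma qf_self_deviation:
  shows "integrable M (\<lambda>\<omega>. (qf P S (Y \<omega>) (Y \<omega>) - real P / t)^2)"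
    and "expectation (\<lambda>\<omega>. (qf P S (Y \<omega>) (Y \<omega>) - real P / t)^2) = 2 * real P / t^2"
proof -
  have eq: "(\<lambda>\<omega>. (qf P S (Y \<omega>) (Y \<omega>) - real P / t)^2) = (\<lambda>\<omega>.
      (qf P S (Y \<omega>) (Y \<omega>))^2 - 2 * (real P / t) * qf P S (Y \<omega>) (Y \<omega>) + (real P / t)^2)"
    by (simp add: power2_eq_square algebra_simps)
  show "integrable M (\<lambda>\<omega>. (qf P S (Y \<omega>) (Y \<omega>) - real P / t)^2)"
    unfolding eq using integrable_qf_self integrable_qf_self_square by simp
  show "expectation (\<lambda>\<omega>. (qf P S (Y \<omega>) (Y \<omega>) - real P / t)^2) = 2 * real P / t^2"
    unfolding eq using integrable_qf_self integrable_qf_self_square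
    by (simp add: expectation_qf_self expectation_qf_self_square[unfolded power2_eq_square]
        power2_eq_square prob_space)
qed

lemma qf_fixed_square:
  shows "integrable M (\<lambda>\<omega>. (qf P S a (Y \<omega>))^2)"
    and "expectation (\<lambda>\<omega>. (qf P S a (Y \<omega>))^2) = qf P S a a / t"
proof -
  have eq: "(\<lambda>\<omega>. (qf P S a (Y \<omega>))^2) =
      (\<lambda>\<omega>. \<Sum>k<P. \<Sum>l<P. a k * a l * (L (\<lambda>j. S k j) \<omega> * L (\<lambda>j. S l j) \<omega>))"
    unfolding qf_eq_sum_dot power2_eq_square sum_product by (simp add: ac_simps)
  show "integrable M (\<lambda>\<omega>. (qf P S a (Y \<omega>))^2)"
    unfolding eq by (intro Bochner_Integration.integrable_sum integrable_mult_right covariance_dot(1))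
  have "expectation (\<lambda>\<omega>. (qf P S a (Y \<omega>))^2) = (\<Sum>k<P. \<Sum>l<P. a k * a l * (S k l / t))"
    unfolding eq
    by (simp add: Bochner_Integration.integral_sum Bochner_Integration.integrable_sum covariance_dot
        cov_row_row)
  also have "\<dots> = qf P S a a / t"
    by (simp add: qf_def sum_divide_distrib ac_simps)
  finally show "expectation (\<lambda>\<omega>. (qf P S a (Y \<omega>))^2) = qf P S a a / t" .
qed

end

lemma qf_indep_square:
  assumes G: "scaled_gaussian M P G C1 Sg S t" and H: "scaled_gaussian M P H C2 Sg S s"
    and indep: "prob_space.indep_var M (PiM {..<P} (\<lambda>_. borel)) G (PiM {..<P} (\<lambda>_. borel)) H"
  shows "integrable M (\<lambda>\<omega>. (qf P S (G \<omega>) (H \<omega>))^2)"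
    and "integral\<^sup>L M (\<lambda>\<omega>. (qf P S (G \<omega>) (H \<omega>))^2) = real P / (t * s)"
proof -
  interpret G: scaled_gaussian M P G C1 Sg S t by (rule G)
  interpret H: scaled_gaussian M P H C2 Sg S s by (rule H)
  define f where "f = (\<lambda>k l \<omega>. dot P (unit_vec k) (G \<omega>) * dot P (unit_vec l) (G \<omega>))"
  define g where "g = (\<lambda>k l \<omega>. dot P (\<lambda>j. S k j) (H \<omega>) * dot P (\<lambda>j. S l j) (H \<omega>))"
  have eq: "(\<lambda>\<omega>. (qf P S (G \<omega>) (H \<omega>))^2) = (\<lambda>\<omega>. \<Sum>k<P. \<Sum>l<P. f k l \<omega> * g k l \<omega>)"
  proof
    fix \<omega>
    have qf_eq: "qf P S (G \<omega>) (H \<omega>) = (\<Sum>k<P. dot P (unit_vec k) (G \<omega>) * dot P (\<lambda>j. S k j) (H \<omega>))"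
      unfolding qf_eq_sum_dot by (intro sum.cong refl) (simp add: dot_unit_vec)
    show "(qf P S (G \<omega>) (H \<omega>))^2 = (\<Sum>k<P. \<Sum>l<P. f k l \<omega> * g k l \<omega>)"
      unfolding power2_eq_square qf_eq sum_product f_def g_def by (simp add: ac_simps)
  qed
  have indep_fg: "G.indep_var borel (f k l) borel (g k l)" for k l
  proof -
    have "G.indep_var borel ((\<lambda>y. dot P (unit_vec k) y * dot P (unit_vec l) y) \<circ> G)
        borel ((\<lambda>y. dot P (\<lambda>j. S k j) y * dot P (\<lambda>j. S l j) y) \<circ> H)"
      by (rule G.indep_var_compose[OF indep]) measurable
    then show ?thesis by (simp add: f_def g_def comp_def)
  qed
  have f_integrable: "integrable M (f k l)" for k l unfolding f_def by (rule G.covariance_dot(1))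
  have g_integrable: "integrable M (g k l)" for k l unfolding g_def by (rule H.covariance_dot(1))
  have fg_integrable: "integrable M (\<lambda>\<omega>. f k l \<omega> * g k l \<omega>)" for k l
    by (rule G.indep_var_integrable[OF indep_fg f_integrable g_integrable])
  show "integrable M (\<lambda>\<omega>. (qf P S (G \<omega>) (H \<omega>))^2)"
    unfolding eq by (intro Bochner_Integration.integrable_sum fg_integrable)
  have "integral\<^sup>L M (\<lambda>\<omega>. (qf P S (G \<omega>) (H \<omega>))^2) =
      (\<Sum>k<P. \<Sum>l<P. integral\<^sup>L M (f k l) * integral\<^sup>L M (g k l))"
    unfolding eq
    by (simp add: Bochner_Integration.integral_sum Bochner_Integration.integrable_sum fg_integrable
        G.indep_var_lebesgue_integral[OF indep_fg f_integrable g_integrable])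
  also have "\<dots> = (\<Sum>k<P. \<Sum>l<P. (Sg k l * S k l) / (t * s))"
    by (intro sum.cong refl)
      (simp add: f_def g_def G.covariance_dot(2) H.covariance_dot(2) G.cov_unit_unit H.cov_row_row)
  also have "\<dots> = real P / (t * s)"
    using G.trace_product by (simp add: sum_divide_distrib[symmetric])
  finally show "integral\<^sup>L M (\<lambda>\<omega>. (qf P S (G \<omega>) (H \<omega>))^2) = real P / (t * s)" .
qed

lemma (in prob_space) distributed_mean_indep_normal:
  assumes I: "finite I" "I \<noteq> {}" and indep: "indep_vars (\<lambda>_. borel) Y I"
    and normal: "\<And>r. r \<in> I \<Longrightarrow> distributed M lborel (Y r) (normal_density 0 \<sigma>)" and \<sigma>: "0 < \<sigma>"
  shows "distributed M lborel (\<lambda>\<omega>. (\<Sum>r\<in>I. Y r \<omega>) / real (card I))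
           (normal_density 0 (\<sigma> / sqrt (card I)))"
proof -
  define N where "N = real (card I)"
  have N: "N > 0" using I by (simp add: N_def card_gt_0_iff)
  have sd: "sqrt (\<Sum>r\<in>I. \<sigma>\<^sup>2) = sqrt N * \<sigma>" using \<sigma> by (simp add: N_def real_sqrt_mult)
  have "distributed M lborel (\<lambda>\<omega>. \<Sum>r\<in>I. Y r \<omega>) (normal_density (\<Sum>r\<in>I. 0) (sqrt (\<Sum>r\<in>I. \<sigma>\<^sup>2)))"
    by (rule sum_indep_normal[OF I indep]) (use \<sigma> normal in auto)
  then have "distributed M lborel (\<lambda>\<omega>. \<Sum>r\<in>I. Y r \<omega>) (normal_density 0 (sqrt N * \<sigma>))"
    unfolding sd sum.neutral_const .
  then have "distributed M lborel (\<lambda>\<omega>. 0 + (1 / N) * (\<Sum>r\<in>I. Y r \<omega>))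
      (normal_density (0 + (1 / N) * 0) (\<bar>1 / N\<bar> * (sqrt N * \<sigma>)))"
    by (rule normal_density_affine) (use N \<sigma> in auto)
  moreover have "(\<lambda>\<omega>. 0 + (1 / N) * (\<Sum>r\<in>I. Y r \<omega>)) = (\<lambda>\<omega>. (\<Sum>r\<in>I. Y r \<omega>) / N)"
    by (simp add: fun_eq_iff)
  moreover have "0 + (1 / N) * 0 = 0" by simp
  moreover have "\<bar>1 / N\<bar> * (sqrt N * \<sigma>) = \<sigma> / sqrt N"
    using N by (simp add: field_simps real_sqrt_mult_self)
  ultimately show ?thesis unfolding N_def[symmetric] by (simp only:)
qed

section \<open>Convergence in probability along a sequence of probability spaces\<close>

text \<open>Stated with exceptional events \<open>B p\<close> of vanishing probability, so that no measurability
  of \<open>X p\<close> is required.\<close>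

definition conv_in_prob :: "(nat \<Rightarrow> 'a measure) \<Rightarrow> (nat \<Rightarrow> 'a \<Rightarrow> real) \<Rightarrow> real \<Rightarrow> bool" where
  "conv_in_prob M X c \<longleftrightarrow> (\<forall>e>0. \<exists>B. (\<forall>p. B p \<in> sets (M p)) \<and> (\<lambda>p. measure (M p) (B p)) \<longlonglongrightarrow> 0 \<and>
      (\<forall>\<^sub>F p in sequentially. \<forall>\<omega>\<in>space (M p) - B p. \<bar>X p \<omega> - c\<bar> \<le> e))"

locale prob_space_sequence =
  fixes M :: "nat \<Rightarrow> 'a measure"
  assumes prob: "\<And>p. prob_space (M p)"
begin

lemma conv_in_prob_const: "s \<longlonglongrightarrow> c \<Longrightarrow> conv_in_prob M (\<lambda>p \<omega>. s p) c"
  unfolding conv_in_prob_def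
proof (intro allI impI exI[of _ "\<lambda>p. {}"] conjI)
  fix e :: real assume "s \<longlonglongrightarrow> c" "e > 0"
  then have "\<forall>\<^sub>F p in sequentially. dist (s p) c < e" by (rule tendstoD)
  then show "\<forall>\<^sub>F p in sequentially. \<forall>\<omega>\<in>space (M p) - {}. \<bar>s p - c\<bar> \<le> e"
    by eventually_elim (simp add: dist_real_def)
qed auto

lemma conv_in_prob_constant: "conv_in_prob M (\<lambda>p \<omega>. c) c"
  by (rule conv_in_prob_const) simp

lemma conv_in_prob_cong:
  assumes X: "conv_in_prob M X c"
    and eq: "\<forall>\<^sub>F p in sequentially. \<forall>\<omega>\<in>space (M p). X p \<omega> = Y p \<omega>"
  shows "conv_in_prob M Y c"
  unfolding conv_in_prob_def
proof (intro allI impI)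
  fix e :: real assume "e > 0"
  then obtain B where B: "\<forall>p. B p \<in> sets (M p)" "(\<lambda>p. measure (M p) (B p)) \<longlonglongrightarrow> 0"
    "\<forall>\<^sub>F p in sequentially. \<forall>\<omega>\<in>space (M p) - B p. \<bar>X p \<omega> - c\<bar> \<le> e"
    using X unfolding conv_in_prob_def by blast
  show "\<exists>B. (\<forall>p. B p \<in> sets (M p)) \<and> (\<lambda>p. measure (M p) (B p)) \<longlonglongrightarrow> 0 \<and>
      (\<forall>\<^sub>F p in sequentially. \<forall>\<omega>\<in>space (M p) - B p. \<bar>Y p \<omega> - c\<bar> \<le> e)"
    using B(1,2) eventually_conj[OF B(3) eq]
    by (intro exI[of _ B] conjI) (auto elim!: eventually_mono)
qed

lemma measure_union_tendsto_zero:
  assumes "\<forall>p. A p \<in> sets (M p)" "\<forall>p. B p \<in> sets (M p)"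
    and "(\<lambda>p. measure (M p) (A p)) \<longlonglongrightarrow> 0" "(\<lambda>p. measure (M p) (B p)) \<longlonglongrightarrow> 0"
  shows "(\<lambda>p. measure (M p) (A p \<union> B p)) \<longlonglongrightarrow> 0"
proof (rule tendsto_sandwich[of "\<lambda>_. 0" _ _ "\<lambda>p. measure (M p) (A p) + measure (M p) (B p)"])
  show "\<forall>\<^sub>F p in sequentially. measure (M p) (A p \<union> B p) \<le> measure (M p) (A p) + measure (M p) (B p)"
    using assms(1,2)
    by (intro always_eventually allI measure_Un_le) (auto intro: prob_space.finite_measure[OF prob])
  show "(\<lambda>p. measure (M p) (A p) + measure (M p) (B p)) \<longlonglongrightarrow> 0"
    using tendsto_add[OF assms(3,4)] by simp
qed auto

lemma conv_in_prob_continuous2: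
  assumes X: "conv_in_prob M X a" and Y: "conv_in_prob M Y b"
    and f: "isCont (\<lambda>z. f (fst z) (snd z)) (a, b)"
  shows "conv_in_prob M (\<lambda>p \<omega>. f (X p \<omega>) (Y p \<omega>)) (f a b)"
  unfolding conv_in_prob_def
proof (intro allI impI)
  fix e :: real assume "e > 0"
  then obtain d where d: "d > 0" "\<And>z. dist z (a, b) < d \<Longrightarrow> dist (f (fst z) (snd z)) (f a b) < e"
    using f unfolding continuous_at_eps_delta by fastforce
  obtain B1 where B1: "\<forall>p. B1 p \<in> sets (M p)" "(\<lambda>p. measure (M p) (B1 p)) \<longlonglongrightarrow> 0"
    "\<forall>\<^sub>F p in sequentially. \<forall>\<omega>\<in>space (M p) - B1 p. \<bar>X p \<omega> - a\<bar> \<le> d / 4"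
    using X d(1) unfolding conv_in_prob_def by (meson zero_less_divide_iff zero_less_numeral)
  obtain B2 where B2: "\<forall>p. B2 p \<in> sets (M p)" "(\<lambda>p. measure (M p) (B2 p)) \<longlonglongrightarrow> 0"
    "\<forall>\<^sub>F p in sequentially. \<forall>\<omega>\<in>space (M p) - B2 p. \<bar>Y p \<omega> - b\<bar> \<le> d / 4"
    using Y d(1) unfolding conv_in_prob_def by (meson zero_less_divide_iff zero_less_numeral)
  have "\<forall>\<^sub>F p in sequentially. \<forall>\<omega>\<in>space (M p) - (B1 p \<union> B2 p). \<bar>f (X p \<omega>) (Y p \<omega>) - f a b\<bar> \<le> e"
    using eventually_conj[OF B1(3) B2(3)]
  proof eventually_elim
    case (elim p)
    show ?case
    proof
      fix \<omega> assume "\<omega> \<in> space (M p) - (B1 p \<union> B2 p)"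
      then have "\<bar>X p \<omega> - a\<bar> \<le> d / 4" "\<bar>Y p \<omega> - b\<bar> \<le> d / 4" using elim by auto
      then have "dist (X p \<omega>, Y p \<omega>) (a, b) < d"
        using d(1) sqrt_sum_squares_le_sum_abs[of "X p \<omega> - a" "Y p \<omega> - b"]
        by (simp add: dist_Pair_Pair dist_real_def)
      from d(2)[OF this] show "\<bar>f (X p \<omega>) (Y p \<omega>) - f a b\<bar> \<le> e" by (simp add: dist_real_def)
    qed
  qed
  then show "\<exists>B. (\<forall>p. B p \<in> sets (M p)) \<and> (\<lambda>p. measure (M p) (B p)) \<longlonglongrightarrow> 0 \<and>
      (\<forall>\<^sub>F p in sequentially. \<forall>\<omega>\<in>space (M p) - B p. \<bar>f (X p \<omega>) (Y p \<omega>) - f a b\<bar> \<le> e)"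
    using B1(1) B2(1) measure_union_tendsto_zero[OF B1(1) B2(1) B1(2) B2(2)]
    by (intro exI[of _ "\<lambda>p. B1 p \<union> B2 p"]) auto
qed

lemma conv_in_prob_continuous:
  assumes X: "conv_in_prob M X a" and f: "isCont f a"
  shows "conv_in_prob M (\<lambda>p \<omega>. f (X p \<omega>)) (f a)"
proof -
  have "conv_in_prob M (\<lambda>p \<omega>. (\<lambda>x y. f x) (X p \<omega>) (X p \<omega>)) ((\<lambda>x y. f x) a a)"
    by (rule conv_in_prob_continuous2[OF X X])
      (rule isCont_o2[where f=fst and a="(a, a)" and g=f], simp_all add: f)
  then show ?thesis by simp
qed

lemma conv_in_prob_minus: "conv_in_prob M X a \<Longrightarrow> conv_in_prob M (\<lambda>p \<omega>. - X p \<omega>) (- a)"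
  using conv_in_prob_continuous[of X a uminus] by simp

lemma conv_in_prob_add: "conv_in_prob M X a \<Longrightarrow> conv_in_prob M Y b \<Longrightarrow> conv_in_prob M (\<lambda>p \<omega>. X p \<omega> + Y p \<omega>) (a + b)"
  using conv_in_prob_continuous2[of X a Y b "(+)"] by simp

lemma conv_in_prob_mult: "conv_in_prob M X a \<Longrightarrow> conv_in_prob M Y b \<Longrightarrow> conv_in_prob M (\<lambda>p \<omega>. X p \<omega> * Y p \<omega>) (a * b)"
  using conv_in_prob_continuous2[of X a Y b "(*)"] by simp

lemma conv_in_prob_divide:
  "conv_in_prob M X a \<Longrightarrow> conv_in_prob M Y b \<Longrightarrow> b \<noteq> 0 \<Longrightarrow> conv_in_prob M (\<lambda>p \<omega>. X p \<omega> / Y p \<omega>) (a / b)"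
  using conv_in_prob_continuous2[of X a Y b "(/)"] by simp

lemma conv_in_prob_sum:
  "finite I \<Longrightarrow> (\<And>i. i \<in> I \<Longrightarrow> conv_in_prob M (X i) (c i)) \<Longrightarrow>
   conv_in_prob M (\<lambda>p \<omega>. \<Sum>i\<in>I. X i p \<omega>) (\<Sum>i\<in>I. c i)"
proof (induction I rule: finite_induct)
  case empty
  then show ?case using conv_in_prob_const[of "\<lambda>_. 0" 0] by simp
next
  case (insert x F)
  then show ?case
    using conv_in_prob_add[of "X x" "c x" "\<lambda>p \<omega>. \<Sum>i\<in>F. X i p \<omega>" "\<Sum>i\<in>F. c i"] by simp
qed

lemma conv_in_prob_bilinear:
  assumes Q: "\<And>i j. i < (N::nat) \<Longrightarrow> j < N \<Longrightarrow> conv_in_prob M (Q i j) (q i j)"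
    and a: "\<And>i. i < N \<Longrightarrow> (\<lambda>p. a p i) \<longlonglongrightarrow> \<alpha> i"
    and b: "\<And>j. j < N \<Longrightarrow> (\<lambda>p. b p j) \<longlonglongrightarrow> \<beta> j"
  shows "conv_in_prob M (\<lambda>p \<omega>. \<Sum>i<N. \<Sum>j<N. a p i * b p j * Q i j p \<omega>) (\<Sum>i<N. \<Sum>j<N. \<alpha> i * \<beta> j * q i j)"
proof (intro conv_in_prob_sum finite_lessThan)
  fix i j assume i: "i \<in> {..<N}" and j: "j \<in> {..<N}"
  have "conv_in_prob M (\<lambda>p \<omega>. a p i * b p j) (\<alpha> i * \<beta> j)"
    using i j by (intro conv_in_prob_const tendsto_mult a b) auto
  from conv_in_prob_mult[OF this Q] i j
  show "conv_in_prob M (\<lambda>p \<omega>. a p i * b p j * Q i j p \<omega>) (\<alpha> i * \<beta> j * q i j)" by simp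
qed

text \<open>Chebyshev's inequality.\<close>

lemma conv_in_prob_L2:
  assumes meas: "\<forall>\<^sub>F p in sequentially. X p \<in> borel_measurable (M p)"
    and int: "\<forall>\<^sub>F p in sequentially. integrable (M p) (\<lambda>\<omega>. (X p \<omega> - s p)^2)"
    and lim: "(\<lambda>p. integral\<^sup>L (M p) (\<lambda>\<omega>. (X p \<omega> - s p)^2)) \<longlonglongrightarrow> 0"
    and s: "s \<longlonglongrightarrow> c"
  shows "conv_in_prob M X c"
  unfolding conv_in_prob_def
proof (intro allI impI)
  fix e :: real assume e: "e > 0"
  define B where "B = (\<lambda>p. if X p \<in> borel_measurable (M p)
      then {\<omega> \<in> space (M p). (e/2)^2 \<le> (X p \<omega> - s p)^2} else space (M p))"
  have B_sets: "\<forall>p. B p \<in> sets (M p)"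
  proof
    fix p show "B p \<in> sets (M p)"
    proof (cases "X p \<in> borel_measurable (M p)")
      case True
      then show ?thesis unfolding B_def by simp measurable
    qed (simp add: B_def)
  qed
  have B_small: "(\<lambda>p. measure (M p) (B p)) \<longlonglongrightarrow> 0"
  proof (rule tendsto_sandwich[of "\<lambda>_. 0" _ _ "\<lambda>p. integral\<^sup>L (M p) (\<lambda>\<omega>. (X p \<omega> - s p)^2) / (e/2)^2"])
    show "\<forall>\<^sub>F p in sequentially. measure (M p) (B p) \<le> integral\<^sup>L (M p) (\<lambda>\<omega>. (X p \<omega> - s p)^2) / (e/2)^2"
      using eventually_conj[OF meas int]
    proof eventually_elim
      case (elim p)
      then have [measurable]: "X p \<in> borel_measurable (M p)" by simp
      have "measure (M p) {\<omega> \<in> space (M p). (e/2)^2 \<le> (X p \<omega> - s p)^2}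
          \<le> integral\<^sup>L (M p) (\<lambda>\<omega>. (X p \<omega> - s p)^2) / (e/2)^2"
        using elim e by (intro integral_Markov_inequality_measure[where A="space (M p)"]) auto
      then show ?case unfolding B_def using elim by simp
    qed
    show "(\<lambda>p. integral\<^sup>L (M p) (\<lambda>\<omega>. (X p \<omega> - s p)^2) / (e/2)^2) \<longlonglongrightarrow> 0"
      using tendsto_divide[OF lim tendsto_const[of "(e/2)^2"]] e by simp
  qed auto
  have "\<forall>\<^sub>F p in sequentially. \<bar>s p - c\<bar> < e/2"
    using tendstoD[OF s, of "e/2"] e by (simp add: dist_real_def)
  then have "\<forall>\<^sub>F p in sequentially. \<forall>\<omega>\<in>space (M p) - B p. \<bar>X p \<omega> - c\<bar> \<le> e"
    using meas
  proof eventually_elim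
    case (elim p)
    show ?case
    proof
      fix \<omega> assume "\<omega> \<in> space (M p) - B p"
      then have "(X p \<omega> - s p)^2 < (e/2)^2" using elim by (auto simp: B_def)
      then have "\<bar>X p \<omega> - s p\<bar> < e/2"
        using e abs_le_square_iff[of "e/2" "X p \<omega> - s p"] by (auto simp: not_less[symmetric])
      then show "\<bar>X p \<omega> - c\<bar> \<le> e" using elim by linarith
    qed
  qed
  then show "\<exists>B. (\<forall>p. B p \<in> sets (M p)) \<and> (\<lambda>p. measure (M p) (B p)) \<longlonglongrightarrow> 0 \<and>
      (\<forall>\<^sub>F p in sequentially. \<forall>\<omega>\<in>space (M p) - B p. \<bar>X p \<omega> - c\<bar> \<le> e)"
    using B_sets B_small by blast
qed

lemma L2_of_bounded_conv_in_prob: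
  assumes meas: "\<And>p. X p \<in> borel_measurable (M p)"
    and bounded: "\<And>p \<omega>. \<omega> \<in> space (M p) \<Longrightarrow> \<bar>X p \<omega> - c\<bar> \<le> 1"
    and X: "conv_in_prob M X c"
  shows "(\<lambda>p. integral\<^sup>L (M p) (\<lambda>\<omega>. (X p \<omega> - c)^2)) \<longlonglongrightarrow> 0"
proof (rule LIMSEQ_I)
  fix r :: real assume r: "r > 0"
  define e where "e = sqrt (r/4)"
  have e: "e > 0" "e^2 = r/4" using r by (auto simp: e_def)
  obtain B where B: "\<forall>p. B p \<in> sets (M p)" "(\<lambda>p. measure (M p) (B p)) \<longlonglongrightarrow> 0"
    "\<forall>\<^sub>F p in sequentially. \<forall>\<omega>\<in>space (M p) - B p. \<bar>X p \<omega> - c\<bar> \<le> e"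
    using X e unfolding conv_in_prob_def by blast
  have "\<forall>\<^sub>F p in sequentially. dist (measure (M p) (B p)) 0 < r/2"
    using tendstoD[OF B(2), of "r/2"] r by simp
  with B(3) have "\<forall>\<^sub>F p in sequentially. norm (integral\<^sup>L (M p) (\<lambda>\<omega>. (X p \<omega> - c)^2) - 0) < r"
  proof eventually_elim
    case (elim p)
    interpret prob_space "M p" by (rule prob)
    have [measurable]: "X p \<in> borel_measurable (M p)" by (rule meas)
    have square_le_1: "(X p \<omega> - c)^2 \<le> 1" if "\<omega> \<in> space (M p)" for \<omega>
      using bounded[OF that] by (simp add: abs_square_le_1)
    have integrable_square: "integrable (M p) (\<lambda>\<omega>. (X p \<omega> - c)^2)"
      by (rule integrable_const_bound[where B=1]) (auto intro!: AE_I2 simp: square_le_1)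
    have integrable_bound: "integrable (M p) (\<lambda>\<omega>. e^2 + indicator (B p) \<omega>)"
      using B(1) by (intro Bochner_Integration.integrable_add) (auto simp: emeasure_eq_measure)
    have "integral\<^sup>L (M p) (\<lambda>\<omega>. (X p \<omega> - c)^2) \<le> integral\<^sup>L (M p) (\<lambda>\<omega>. e^2 + indicator (B p) \<omega>)"
    proof (rule integral_mono[OF integrable_square integrable_bound])
      fix \<omega> assume \<omega>: "\<omega> \<in> space (M p)"
      show "(X p \<omega> - c)^2 \<le> e^2 + indicator (B p) \<omega>"
      proof (cases "\<omega> \<in> B p")
        case True
        then show ?thesis using square_le_1[OF \<omega>] by (simp add: add_increasing)
      next
        case False
        then have "\<bar>X p \<omega> - c\<bar> \<le> e" using elim \<omega> by auto
        then show ?thesis using False e(1) power2_le_iff_abs_le[of e "X p \<omega> - c"] by simp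
      qed
    qed
    also have "\<dots> = e^2 + measure (M p) (B p)"
      using B(1) prob_space by (subst Bochner_Integration.integral_add) (auto simp: emeasure_eq_measure)
    also have "\<dots> < r" using elim e r by (simp add: algebra_simps)
    finally have "integral\<^sup>L (M p) (\<lambda>\<omega>. (X p \<omega> - c)^2) < r" .
    moreover have "0 \<le> integral\<^sup>L (M p) (\<lambda>\<omega>. (X p \<omega> - c)^2)" by (intro integral_nonneg_AE) simp
    ultimately show ?case by simp
  qed
  then show "\<exists>no. \<forall>n\<ge>no. norm (integral\<^sup>L (M n) (\<lambda>\<omega>. (X n \<omega> - c)^2) - 0) < r"
    by (simp add: eventually_sequentially)
qed

end

section \<open>The standard normal distribution function\<close>

lemma real_distribution_std_normal: "real_distribution (density lborel std_normal_density)"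
proof -
  interpret prob_space "density lborel std_normal_density"
    by (rule prob_space_normal_density) simp
  show ?thesis by unfold_locales simp
qed

lemma Phi_eq_cdf: "Phi = cdf (density lborel std_normal_density)"
  by (simp add: Phi_def cdf_def fun_eq_iff)

lemma Phi_bounds: "0 \<le> Phi x" "Phi x \<le> 1"
proof -
  interpret D: real_distribution "density lborel std_normal_density"
    by (rule real_distribution_std_normal)
  show "0 \<le> Phi x" "Phi x \<le> 1" unfolding Phi_eq_cdf using D.cdf_nonneg D.cdf_bounded_prob by auto
qed

lemma isCont_Phi: "isCont Phi x"
proof -
  interpret D: real_distribution "density lborel std_normal_density"
    by (rule real_distribution_std_normal)
  have "emeasure (density lborel std_normal_density) {x} = 0"
    by (subst emeasure_density) (auto intro!: nn_integral_null_set[simplified])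
  then have "measure (density lborel std_normal_density) {x} = 0" by (simp add: measure_def)
  then show ?thesis unfolding Phi_eq_cdf using D.isCont_cdf by simp
qed

lemma Phi_measurable [measurable]: "Phi \<in> borel_measurable borel"
  by (intro borel_measurable_continuous_onI continuous_at_imp_continuous_on ballI isCont_Phi)

section \<open>Moments of random variables close to a constant in \<open>L\<^sup>2\<close>\<close>

context prob_space
begin

lemma integrable_near_constant:
  fixes X :: "'a \<Rightarrow> real"
  assumes [measurable]: "X \<in> borel_measurable M"
    and near: "\<And>\<omega>. \<omega> \<in> space M \<Longrightarrow> \<bar>X \<omega> - t\<bar> \<le> B"
  shows "integrable M X" "integrable M (\<lambda>\<omega>. (X \<omega>)^2)" "integrable M (\<lambda>\<omega>. (X \<omega> - t)^2)"
proof -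
  have X_abs: "\<bar>X \<omega>\<bar> \<le> \<bar>t\<bar> + B" if "\<omega> \<in> space M" for \<omega> using near[OF that] by linarith
  have square_bound: "\<bar>z\<bar> \<le> c \<Longrightarrow> z^2 \<le> c^2" for z c :: real
    using power_mono[of "\<bar>z\<bar>" c 2] by simp
  show "integrable M X"
    by (rule integrable_const_bound[where B="\<bar>t\<bar> + B"]) (auto intro!: AE_I2 X_abs)
  show "integrable M (\<lambda>\<omega>. (X \<omega>)^2)"
    by (rule integrable_const_bound[where B="(\<bar>t\<bar> + B)^2"]) (auto intro!: AE_I2 square_bound X_abs)
  show "integrable M (\<lambda>\<omega>. (X \<omega> - t)^2)"
    by (rule integrable_const_bound[where B="B^2"]) (auto intro!: AE_I2 square_bound near)
qed

lemma variance_shifted: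
  fixes Z :: "'a \<Rightarrow> real"
  assumes Z: "integrable M Z" "integrable M (\<lambda>\<omega>. (Z \<omega>)^2)"
  shows "variance Z = expectation (\<lambda>\<omega>. (Z \<omega> - s)^2) - (expectation Z - s)^2"
proof -
  have shifted: "(\<lambda>\<omega>. (Z \<omega> - s)^2) = (\<lambda>\<omega>. (Z \<omega>)^2 - 2 * s * Z \<omega> + s^2)" for s
    by (simp add: power2_eq_square algebra_simps)
  have expectation_shifted:
    "expectation (\<lambda>\<omega>. (Z \<omega> - s)^2) = expectation (\<lambda>\<omega>. (Z \<omega>)^2) - 2 * s * expectation Z + s^2" for s
    unfolding shifted using Z by (simp add: prob_space)
  show ?thesis
    unfolding expectation_shifted by (simp add: power2_eq_square algebra_simps)
qed

lemma variance_le_shifted: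
  fixes Z :: "'a \<Rightarrow> real"
  assumes "integrable M Z" "integrable M (\<lambda>\<omega>. (Z \<omega>)^2)"
  shows "\<bar>variance Z\<bar> \<le> expectation (\<lambda>\<omega>. (Z \<omega> - s)^2)"
    and "(expectation Z - s)^2 \<le> expectation (\<lambda>\<omega>. (Z \<omega> - s)^2)"
proof -
  have "0 \<le> variance Z" by (intro integral_nonneg_AE) simp
  then show "\<bar>variance Z\<bar> \<le> expectation (\<lambda>\<omega>. (Z \<omega> - s)^2)"
    and "(expectation Z - s)^2 \<le> expectation (\<lambda>\<omega>. (Z \<omega> - s)^2)"
    using variance_shifted[OF assms, of s] zero_le_power2[of "expectation Z - s"] by auto
qed

lemma covariance_le_near_constant:
  fixes X Y :: "'a \<Rightarrow> real"
  assumes [measurable]: "X \<in> borel_measurable M" "Y \<in> borel_measurable M"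
    and X_near: "\<And>\<omega>. \<omega> \<in> space M \<Longrightarrow> \<bar>X \<omega> - t\<bar> \<le> 1"
    and Y_near: "\<And>\<omega>. \<omega> \<in> space M \<Longrightarrow> \<bar>Y \<omega> - t\<bar> \<le> 1"
  shows "\<bar>covariance M X Y\<bar> \<le> expectation (\<lambda>\<omega>. (X \<omega> - t)^2) + expectation (\<lambda>\<omega>. (Y \<omega> - t)^2)"
proof -
  have X: "integrable M X" "integrable M (\<lambda>\<omega>. (X \<omega>)^2)" "integrable M (\<lambda>\<omega>. (X \<omega> - t)^2)"
    by (auto intro!: integrable_near_constant[where B=1, OF assms(1)] X_near)
  have Y: "integrable M Y" "integrable M (\<lambda>\<omega>. (Y \<omega>)^2)" "integrable M (\<lambda>\<omega>. (Y \<omega> - t)^2)"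
    by (auto intro!: integrable_near_constant[where B=1, OF assms(2)] Y_near)
  have XY: "integrable M (\<lambda>\<omega>. (X \<omega> - t) * (Y \<omega> - t))"
    using X_near Y_near
    by (intro integrable_const_bound[where B=1] AE_I2) (auto simp: abs_mult intro: mult_le_one)
  define u where "u = expectation X - t"
  define v where "v = expectation Y - t"
  have "(\<lambda>\<omega>. (X \<omega> - expectation X) * (Y \<omega> - expectation Y)) =
      (\<lambda>\<omega>. (X \<omega> - t) * (Y \<omega> - t) - v * (X \<omega> - t) - u * (Y \<omega> - t) + u * v)"
    by (rule ext) (simp add: u_def v_def algebra_simps)
  moreover have "expectation (\<lambda>\<omega>. X \<omega> - t) = u" "expectation (\<lambda>\<omega>. Y \<omega> - t) = v"
    using X Y by (simp_all add: u_def v_def prob_space)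
  ultimately have covariance_eq: "covariance M X Y = expectation (\<lambda>\<omega>. (X \<omega> - t) * (Y \<omega> - t)) - u * v"
    unfolding covariance_def using XY X Y by (simp add: prob_space)
  let ?a = "expectation (\<lambda>\<omega>. (X \<omega> - t)^2)" and ?b = "expectation (\<lambda>\<omega>. (Y \<omega> - t)^2)"
  have am_gm: "\<bar>x * y\<bar> \<le> (x^2 + y^2) / 2" for x y :: real
    using sum_squares_bound[of "\<bar>x\<bar>" "\<bar>y\<bar>"] by (simp add: abs_mult)
  have "\<bar>expectation (\<lambda>\<omega>. (X \<omega> - t) * (Y \<omega> - t))\<bar> \<le> expectation (\<lambda>\<omega>. \<bar>(X \<omega> - t) * (Y \<omega> - t)\<bar>)"
    by (rule integral_abs_bound)
  also have "\<dots> \<le> expectation (\<lambda>\<omega>. ((X \<omega> - t)^2 + (Y \<omega> - t)^2) / 2)"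
    using XY X Y by (intro integral_mono am_gm) simp_all
  also have "\<dots> = (?a + ?b) / 2"
    using X Y by simp
  finally have product_bound: "\<bar>expectation (\<lambda>\<omega>. (X \<omega> - t) * (Y \<omega> - t))\<bar> \<le> (?a + ?b) / 2" .
  have "u^2 \<le> ?a" "v^2 \<le> ?b"
    unfolding u_def v_def by (fact variance_le_shifted(2)[OF X(1,2)] variance_le_shifted(2)[OF Y(1,2)])+
  then have "(u^2 + v^2) / 2 \<le> (?a + ?b) / 2"
    by (intro divide_right_mono add_mono) simp_all
  with am_gm[of u v] have means_bound: "\<bar>u * v\<bar> \<le> (?a + ?b) / 2"
    by (rule order_trans)
  have "\<bar>covariance M X Y\<bar> \<le> \<bar>expectation (\<lambda>\<omega>. (X \<omega> - t) * (Y \<omega> - t))\<bar> + \<bar>u * v\<bar>"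
    unfolding covariance_eq by (rule abs_triangle_ineq4)
  also have "\<dots> \<le> (?a + ?b) / 2 + (?a + ?b) / 2"
    by (rule add_mono[OF product_bound means_bound])
  finally show ?thesis by simp
qed

lemma moments_near_constant:
  fixes X Y :: "'a \<Rightarrow> real"
  assumes [measurable]: "X \<in> borel_measurable M" "Y \<in> borel_measurable M"
    and X_near: "\<And>\<omega>. \<omega> \<in> space M \<Longrightarrow> \<bar>X \<omega> - t\<bar> \<le> 1"
    and Y_near: "\<And>\<omega>. \<omega> \<in> space M \<Longrightarrow> \<bar>Y \<omega> - t\<bar> \<le> 1"
  defines "a \<equiv> expectation (\<lambda>\<omega>. (X \<omega> - t)^2)" and "b \<equiv> expectation (\<lambda>\<omega>. (Y \<omega> - t)^2)"
  shows "\<bar>variance Y\<bar> \<le> b" "\<bar>variance X\<bar> \<le> a"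
    "\<bar>covariance M X Y\<bar> \<le> a + b"
    "\<bar>variance (\<lambda>\<omega>. Y \<omega> - X \<omega>)\<bar> \<le> 2 * a + 2 * b"
    "\<bar>expectation (\<lambda>\<omega>. Y \<omega> - X \<omega>)\<bar> \<le> sqrt (2 * a + 2 * b)"
    "\<bar>sqrt (expectation (\<lambda>\<omega>. (X \<omega> - Y \<omega>)^2))\<bar> \<le> sqrt (2 * a + 2 * b)"
proof -
  have X: "integrable M X" "integrable M (\<lambda>\<omega>. (X \<omega>)^2)" "integrable M (\<lambda>\<omega>. (X \<omega> - t)^2)"
    by (auto intro!: integrable_near_constant[where B=1, OF assms(1)] X_near)
  have Y: "integrable M Y" "integrable M (\<lambda>\<omega>. (Y \<omega>)^2)" "integrable M (\<lambda>\<omega>. (Y \<omega> - t)^2)"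
    by (auto intro!: integrable_near_constant[where B=1, OF assms(2)] Y_near)
  have D_near: "\<bar>Y \<omega> - X \<omega>\<bar> \<le> 2" if "\<omega> \<in> space M" for \<omega>
    using X_near[OF that] Y_near[OF that] by linarith
  have D: "integrable M (\<lambda>\<omega>. Y \<omega> - X \<omega>)" "integrable M (\<lambda>\<omega>. (Y \<omega> - X \<omega>)^2)"
    by (auto intro!: integrable_near_constant[where B=2 and t=0, simplified] D_near)
  show "\<bar>variance Y\<bar> \<le> b" unfolding b_def by (rule variance_le_shifted(1)[OF Y(1,2)])
  show "\<bar>variance X\<bar> \<le> a" unfolding a_def by (rule variance_le_shifted(1)[OF X(1,2)])
  show "\<bar>covariance M X Y\<bar> \<le> a + b"
    unfolding a_def b_def by (rule covariance_le_near_constant[OF assms(1,2) X_near Y_near])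
  have "(Y \<omega> - X \<omega>)^2 \<le> 2 * (X \<omega> - t)^2 + 2 * (Y \<omega> - t)^2" for \<omega>
  proof -
    have "2 * (X \<omega> - t)^2 + 2 * (Y \<omega> - t)^2 - (Y \<omega> - X \<omega>)^2 = (X \<omega> + Y \<omega> - 2 * t)^2"
      by (simp add: power2_eq_square algebra_simps)
    then show ?thesis by (metis diff_ge_0_iff_ge zero_le_power2)
  qed
  then have "expectation (\<lambda>\<omega>. (Y \<omega> - X \<omega>)^2) \<le> expectation (\<lambda>\<omega>. 2 * (X \<omega> - t)^2 + 2 * (Y \<omega> - t)^2)"
    using D X Y by (intro integral_mono) simp_all
  also have "\<dots> = 2 * a + 2 * b" using X Y by (simp add: a_def b_def)
  finally have D_square: "expectation (\<lambda>\<omega>. (Y \<omega> - X \<omega>)^2) \<le> 2 * a + 2 * b" .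
  show "\<bar>variance (\<lambda>\<omega>. Y \<omega> - X \<omega>)\<bar> \<le> 2 * a + 2 * b"
    using variance_le_shifted(1)[OF D(1,2), of 0] D_square by simp
  have "(expectation (\<lambda>\<omega>. Y \<omega> - X \<omega>))^2 \<le> 2 * a + 2 * b"
    using variance_le_shifted(2)[OF D(1,2), of 0] D_square by simp
  then show "\<bar>expectation (\<lambda>\<omega>. Y \<omega> - X \<omega>)\<bar> \<le> sqrt (2 * a + 2 * b)"
    by (simp add: real_le_rsqrt)
  have "(\<lambda>\<omega>. (X \<omega> - Y \<omega>)^2) = (\<lambda>\<omega>. (Y \<omega> - X \<omega>)^2)" by (simp add: power2_commute)
  then show "\<bar>sqrt (expectation (\<lambda>\<omega>. (X \<omega> - Y \<omega>)^2))\<bar> \<le> sqrt (2 * a + 2 * b)"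
    using D_square by simp
qed

end

lemma moment_limits_of_L2_convergence:
  fixes X Y :: "nat \<Rightarrow> 'a \<Rightarrow> real"
  assumes prob: "\<And>p. prob_space (M p)"
    and measurable: "\<And>p. X p \<in> borel_measurable (M p)" "\<And>p. Y p \<in> borel_measurable (M p)"
    and X_near: "\<And>p \<omega>. \<omega> \<in> space (M p) \<Longrightarrow> \<bar>X p \<omega> - t\<bar> \<le> 1"
    and Y_near: "\<And>p \<omega>. \<omega> \<in> space (M p) \<Longrightarrow> \<bar>Y p \<omega> - t\<bar> \<le> 1"
    and X_L2: "(\<lambda>p. integral\<^sup>L (M p) (\<lambda>\<omega>. (X p \<omega> - t)^2)) \<longlonglongrightarrow> 0"
    and Y_L2: "(\<lambda>p. integral\<^sup>L (M p) (\<lambda>\<omega>. (Y p \<omega> - t)^2)) \<longlonglongrightarrow> 0"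
  shows "((\<lambda>p. prob_space.variance (M p) (Y p)) \<longlonglongrightarrow> 0)
     \<and> ((\<lambda>p. prob_space.variance (M p) (X p)) \<longlonglongrightarrow> 0)
     \<and> ((\<lambda>p. covariance (M p) (X p) (Y p)) \<longlonglongrightarrow> 0)
     \<and> ((\<lambda>p. prob_space.variance (M p) (\<lambda>\<omega>. Y p \<omega> - X p \<omega>)) \<longlonglongrightarrow> 0)
     \<and> ((\<lambda>p. \<bar>prob_space.expectation (M p) (\<lambda>\<omega>. Y p \<omega> - X p \<omega>)\<bar>) \<longlonglongrightarrow> 0)
     \<and> ((\<lambda>p. sqrt (prob_space.expectation (M p) (\<lambda>\<omega>. (X p \<omega> - Y p \<omega>)\<^sup>2))) \<longlonglongrightarrow> 0)"
proof -
  have tendsto_zero_if_bounded: "f \<longlonglongrightarrow> 0" if "\<And>p. \<bar>f p\<bar> \<le> g p" "g \<longlonglongrightarrow> 0"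
    for f g :: "nat \<Rightarrow> real"
    using that by (intro Lim_null_comparison[of f g]) (simp_all add: always_eventually)
  have L2_sum: "(\<lambda>p. integral\<^sup>L (M p) (\<lambda>\<omega>. (X p \<omega> - t)^2) + integral\<^sup>L (M p) (\<lambda>\<omega>. (Y p \<omega> - t)^2)) \<longlonglongrightarrow> 0"
    using tendsto_add[OF X_L2 Y_L2] by simp
  have L2_sum2: "(\<lambda>p. 2 * integral\<^sup>L (M p) (\<lambda>\<omega>. (X p \<omega> - t)^2) + 2 * integral\<^sup>L (M p) (\<lambda>\<omega>. (Y p \<omega> - t)^2)) \<longlonglongrightarrow> 0"
    using tendsto_add[OF tendsto_mult[OF tendsto_const X_L2, of 2] tendsto_mult[OF tendsto_const Y_L2, of 2]]
    by simp
  have L2_sum2_sqrt: "(\<lambda>p. sqrt (2 * integral\<^sup>L (M p) (\<lambda>\<omega>. (X p \<omega> - t)^2)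
      + 2 * integral\<^sup>L (M p) (\<lambda>\<omega>. (Y p \<omega> - t)^2))) \<longlonglongrightarrow> 0"
    using tendsto_real_sqrt[OF L2_sum2] by simp
  note bounds = prob_space.moments_near_constant[OF prob measurable X_near Y_near]
  show ?thesis
    using tendsto_zero_if_bounded[OF bounds(1) Y_L2] tendsto_zero_if_bounded[OF bounds(2) X_L2]
      tendsto_zero_if_bounded[OF bounds(3) L2_sum] tendsto_zero_if_bounded[OF bounds(4) L2_sum2]
      tendsto_zero_if_bounded[OF bounds(5) L2_sum2_sqrt]
      tendsto_zero_if_bounded[OF bounds(6) L2_sum2_sqrt]
    by (simp add: tendsto_rabs_zero_iff)
qed

section \<open>The model and the pairings of its Gaussian components\<close>

lemma tendsto_one_over_at_top: "filterlim t at_top sequentially \<Longrightarrow> (\<lambda>p. 1 / t p :: real) \<longlonglongrightarrow> 0"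
  using tendsto_inverse_0_at_top by (simp add: inverse_eq_divide)

lemma convex_combination_unit_interval:
  fixes a x y :: real
  assumes "0 \<le> a" "a \<le> 1" "0 \<le> x" "x \<le> 1" "0 \<le> y" "y \<le> 1"
  shows "0 \<le> a * x + (1 - a) * y \<and> a * x + (1 - a) * y \<le> 1"
proof -
  have "a * x \<le> a" "(1 - a) * y \<le> 1 - a" using assms by (auto intro: mult_left_le)
  moreover have "0 \<le> a * x" "0 \<le> (1 - a) * y" using assms by auto
  ultimately show ?thesis by linarith
qed

lemma neg_one_power_square: "(-1::real) ^ i * (-1) ^ i = 1"
  by (simp flip: power_add power_mult_distrib)

lemma neg_one_power_Suc_cancel: "(-1::real) ^ (i + 1) * ((-1) ^ i * x) = - x"
  by (simp add: mult.assoc[symmetric] neg_one_power_square)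

lemma neg_one_power_cancel: "(-1::real) ^ i * ((- ((-1) ^ i * x) + t) / s) * 1 = (- x + (-1) ^ i * t) / s"
  by (simp add: field_simps mult.assoc[symmetric] neg_one_power_square)

locale lda_model =
  fixes a0 :: real
    and M :: "nat \<Rightarrow> 'a measure"
    and Sig Sinv :: "nat \<Rightarrow> nat \<Rightarrow> nat \<Rightarrow> real"
    and n :: "nat \<Rightarrow> nat \<Rightarrow> nat"
    and nu :: "nat \<Rightarrow> nat \<Rightarrow> real"
    and m :: "nat \<Rightarrow> nat \<Rightarrow> nat \<Rightarrow> real"
    and mu :: "nat \<Rightarrow> nat \<Rightarrow> 'a \<Rightarrow> nat \<Rightarrow> real"
    and X :: "nat \<Rightarrow> nat \<Rightarrow> nat \<Rightarrow> 'a \<Rightarrow> nat \<Rightarrow> real"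
    and J gam :: "nat \<Rightarrow> real"
    and Dbar2 :: real
  assumes a0: "0 < a0" "a0 < 1"
    and Sig_sym: "\<And>p k l. k < p \<Longrightarrow> l < p \<Longrightarrow> Sig p k l = Sig p l k"
    and Sig_pd: "\<And>p x. (\<exists>k<p. x k \<noteq> 0) \<Longrightarrow> qf p (Sig p) x x > 0"
    and Sinv_r: "\<And>p k l. k < p \<Longrightarrow> l < p \<Longrightarrow>
                   (\<Sum>j<p. Sig p k j * Sinv p j l) = (if k = l then 1 else 0)"
    and Sinv_l: "\<And>p k l. k < p \<Longrightarrow> l < p \<Longrightarrow>
                   (\<Sum>j<p. Sinv p k j * Sig p j l) = (if k = l then 1 else 0)"
    and nu_pos: "\<And>i p. i < 2 \<Longrightarrow> nu i p > 0"
    and prob: "\<And>p. prob_space (M p)"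
    and mu_law: "\<And>i p. i < 2 \<Longrightarrow>
                   mvn (M p) p (mu p i) (m i p) (\<lambda>k l. Sig p k l / nu i p)"
    and noise_law: "\<And>i j p. i < 2 \<Longrightarrow> j < n i p \<Longrightarrow>
                   mvn (M p) p (\<lambda>\<omega>. restrict (\<lambda>k. X p i j \<omega> k - mu p i \<omega> k) {..<p}) (\<lambda>_. 0) (Sig p)"
    and indep: "\<And>p. prob_space.indep_vars (M p) (\<lambda>_. PiM {..<p} (\<lambda>_. borel))
                   (\<lambda>r \<omega>. case r of MuI i \<Rightarrow> mu p i \<omega>
                     | NoiseI i j \<Rightarrow> restrict (\<lambda>k. X p i j \<omega> k - mu p i \<omega> k) {..<p})
                   ({MuI 0, MuI 1} \<union> {NoiseI i j | i j. i < 2 \<and> j < n i p})"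
    and n_inf: "\<And>i. i < 2 \<Longrightarrow> filterlim (\<lambda>p. n i p) at_top sequentially"
    and nu_inf: "\<And>i. i < 2 \<Longrightarrow> filterlim (\<lambda>p. nu i p) at_top sequentially"
    and J_lim: "\<And>i. i < 2 \<Longrightarrow> (\<lambda>p. real p / real (n i p)) \<longlonglongrightarrow> J i"
    and J_nonneg: "\<And>i. i < 2 \<Longrightarrow> 0 \<le> J i"
    and gam_lim: "\<And>i. i < 2 \<Longrightarrow> (\<lambda>p. nu i p / real (n i p)) \<longlonglongrightarrow> gam i"
    and gam_pos: "\<And>i. i < 2 \<Longrightarrow> 0 < gam i"
    and m_conv: "\<And>i j. i < 2 \<Longrightarrow> j < 2 \<Longrightarrow> convergent (\<lambda>p. qf p (Sinv p) (m i p) (m j p))"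
    and Dbar: "(\<lambda>p. qf p (Sinv p) (\<lambda>k. m 0 p k - m 1 p k) (\<lambda>k. m 0 p k - m 1 p k)) \<longlonglongrightarrow> Dbar2"
    and F_pos: "Dbar2 + J 0 + J 1 + J 0 / gam 0 + J 1 / gam 1 > 0"
begin

sublocale prob_space_sequence M
  by (rule prob_space_sequence.intro) (rule prob)

abbreviation PB :: "nat \<Rightarrow> (nat \<Rightarrow> real) measure" where
  "PB p \<equiv> PiM {..<p} (\<lambda>_. borel)"

abbreviation indices :: "nat \<Rightarrow> rvidx set" where
  "indices p \<equiv> {MuI 0, MuI 1} \<union> {NoiseI i j | i j. i < 2 \<and> j < n i p}"

definition model_vectors :: "nat \<Rightarrow> rvidx \<Rightarrow> 'a \<Rightarrow> nat \<Rightarrow> real" where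
  "model_vectors p = (\<lambda>r \<omega>. case r of MuI i \<Rightarrow> mu p i \<omega>
                        | NoiseI i j \<Rightarrow> restrict (\<lambda>k. X p i j \<omega> k - mu p i \<omega> k) {..<p})"

definition mean_dev :: "nat \<Rightarrow> nat \<Rightarrow> 'a \<Rightarrow> nat \<Rightarrow> real" where
  "mean_dev i p \<omega> = restrict (\<lambda>k. mu p i \<omega> k - m i p k) {..<p}"

definition avg_noise :: "nat \<Rightarrow> nat \<Rightarrow> 'a \<Rightarrow> nat \<Rightarrow> real" where
  "avg_noise i p \<omega> = restrict (\<lambda>k. (\<Sum>j<n i p. X p i j \<omega> k - mu p i \<omega> k) / real (n i p)) {..<p}"

lemma inverse_matrices_Sig: "inverse_matrices p (Sig p) (Sinv p)"
  by unfold_locales (fact Sig_sym, fact Sinv_r, fact Sinv_l)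

lemma qf_Sinv_commute: "qf p (Sinv p) x y = qf p (Sinv p) y x"
  by (rule qf_commute) (rule inverse_matrices.S_symmetric[OF inverse_matrices_Sig])

lemma n_tendsto: "i < 2 \<Longrightarrow> filterlim (\<lambda>p. real (n i p)) at_top sequentially"
  using filterlim_compose[OF filterlim_real_sequentially n_inf] by (simp add: o_def)

lemma n_pos_eventually: "i < 2 \<Longrightarrow> \<forall>\<^sub>F p in sequentially. 0 < n i p"
  using filterlim_at_top[THEN iffD1, OF n_inf, of i, rule_format, of 1] by (auto elim: eventually_mono)

lemma n01_pos_eventually: "\<forall>\<^sub>F p in sequentially. 0 < n 0 p \<and> 0 < n 1 p"
  using eventually_conj[OF n_pos_eventually[of 0] n_pos_eventually[of 1]] by simp

lemma mu_measurable: "i < 2 \<Longrightarrow> mu p i \<in> measurable (M p) (PB p)"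
  using mu_law by (simp add: mvn_def)

lemma mu_component_measurable [measurable]:
  "i < 2 \<Longrightarrow> k < p \<Longrightarrow> (\<lambda>\<omega>. mu p i \<omega> k) \<in> borel_measurable (M p)"
  using measurable_compose[OF mu_measurable measurable_component_singleton[of k "{..<p}"]] by simp

lemma noise_component_measurable:
  assumes "i < 2" "j < n i p" "k < p"
  shows "(\<lambda>\<omega>. X p i j \<omega> k - mu p i \<omega> k) \<in> borel_measurable (M p)"
proof -
  have "(\<lambda>\<omega>. restrict (\<lambda>k. X p i j \<omega> k - mu p i \<omega> k) {..<p}) \<in> measurable (M p) (PB p)"
    using noise_law[OF assms(1,2)] by (simp add: mvn_def)
  from measurable_compose[OF this measurable_component_singleton[of k "{..<p}"]] assms(3)
  show ?thesis by simp
qed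

lemma X_component_measurable:
  assumes "i < 2" "j < n i p" "k < p"
  shows "(\<lambda>\<omega>. X p i j \<omega> k) \<in> borel_measurable (M p)"
  using borel_measurable_add[OF noise_component_measurable[OF assms] mu_component_measurable[OF assms(1,3)]]
  by simp

lemma mean_dev_measurable: "i < 2 \<Longrightarrow> mean_dev i p \<in> measurable (M p) (PB p)"
  unfolding mean_dev_def by (intro measurable_restrict) simp

lemma avg_noise_measurable: "i < 2 \<Longrightarrow> avg_noise i p \<in> measurable (M p) (PB p)"
  unfolding avg_noise_def
  by (intro measurable_restrict borel_measurable_divide borel_measurable_sum noise_component_measurable
      measurable_const) auto

lemma mvn_mean_dev: "i < 2 \<Longrightarrow> mvn (M p) p (mean_dev i p) (\<lambda>_. 0) (\<lambda>k l. Sig p k l / nu i p)"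
  unfolding mvn_def
proof (intro conjI allI impI mean_dev_measurable)
  fix a :: "nat \<Rightarrow> real" assume i: "i < 2" and a: "\<exists>k<p. a k \<noteq> 0"
  interpret prob_space "M p" by (rule prob)
  define sd where "sd = sqrt (qf p (\<lambda>k l. Sig p k l / nu i p) a a)"
  have sd_pos: "0 < sd"
    using Sig_pd[OF a] nu_pos[OF i] by (simp add: sd_def qf_divide_matrix)
  have "distributed (M p) lborel (\<lambda>\<omega>. \<Sum>k<p. a k * mu p i \<omega> k)
      (normal_density (\<Sum>k<p. a k * m i p k) sd)"
    using mu_law[OF i] a unfolding mvn_def sd_def by blast
  from normal_density_affine[OF this sd_pos, of 1 "- (\<Sum>k<p. a k * m i p k)"]
  have "distributed (M p) lborel (\<lambda>\<omega>. (\<Sum>k<p. a k * mu p i \<omega> k) - (\<Sum>k<p. a k * m i p k))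
      (normal_density 0 sd)"
    by simp
  moreover have "(\<lambda>\<omega>. (\<Sum>k<p. a k * mu p i \<omega> k) - (\<Sum>k<p. a k * m i p k)) =
      (\<lambda>\<omega>. \<Sum>k<p. a k * mean_dev i p \<omega> k)"
    by (auto simp: mean_dev_def sum_subtractf[symmetric] algebra_simps intro!: sum.cong)
  ultimately show "distributed (M p) lborel (\<lambda>\<omega>. \<Sum>k<p. a k * mean_dev i p \<omega> k)
      (normal_density (\<Sum>k<p. a k * 0) (sqrt (qf p (\<lambda>k l. Sig p k l / nu i p) a a)))"
    by (simp add: sd_def)
qed

lemma mvn_avg_noise:
  assumes i: "i < 2" and n_pos: "0 < n i p"
  shows "mvn (M p) p (avg_noise i p) (\<lambda>_. 0) (\<lambda>k l. Sig p k l / real (n i p))"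
  unfolding mvn_def
proof (intro conjI allI impI avg_noise_measurable[OF i])
  fix a :: "nat \<Rightarrow> real" assume a: "\<exists>k<p. a k \<noteq> 0"
  interpret prob_space "M p" by (rule prob)
  define I where "I = NoiseI i ` {..<n i p}"
  define Y where "Y = (\<lambda>r \<omega>. dot p a (model_vectors p r \<omega>))"
  define q where "q = qf p (Sig p) a a"
  have q_pos: "q > 0" using Sig_pd[OF a] by (simp add: q_def)
  have indep_Y: "indep_vars (\<lambda>_. borel) Y I"
  proof -
    have "indep_vars (\<lambda>_. borel) (\<lambda>r \<omega>. dot p a (model_vectors p r \<omega>)) (indices p)"
      by (rule indep_vars_compose2[OF indep[of p, folded model_vectors_def]]) simp
    then show ?thesis unfolding Y_def by (rule indep_vars_subset) (use i in \<open>auto simp: I_def\<close>)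
  qed
  have Y_noise: "Y (NoiseI i j) = (\<lambda>\<omega>. \<Sum>k<p. a k * (X p i j \<omega> k - mu p i \<omega> k))" for j
    by (simp add: Y_def model_vectors_def dot_def)
  have Y_normal: "distributed (M p) lborel (Y r) (normal_density 0 (sqrt q))" if "r \<in> I" for r
  proof -
    obtain j where j: "j < n i p" "r = NoiseI i j" using \<open>r \<in> I\<close> by (auto simp: I_def)
    show ?thesis using noise_law[OF i j(1)] a unfolding mvn_def j(2) Y_noise q_def by simp
  qed
  have card_I: "card I = n i p" unfolding I_def by (subst card_image) (auto simp: inj_on_def)
  have "distributed (M p) lborel (\<lambda>\<omega>. (\<Sum>r\<in>I. Y r \<omega>) / real (card I))
      (normal_density 0 (sqrt q / sqrt (card I)))"
    by (rule distributed_mean_indep_normal[OF _ _ indep_Y Y_normal])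
      (use n_pos q_pos in \<open>auto simp: I_def\<close>)
  moreover have "(\<lambda>\<omega>. (\<Sum>r\<in>I. Y r \<omega>) / real (card I)) = (\<lambda>\<omega>. \<Sum>k<p. a k * avg_noise i p \<omega> k)"
  proof
    fix \<omega>
    have "(\<Sum>r\<in>I. Y r \<omega>) = (\<Sum>j<n i p. \<Sum>k<p. a k * (X p i j \<omega> k - mu p i \<omega> k))"
      unfolding I_def by (subst sum.reindex) (auto simp: inj_on_def Y_noise)
    also have "\<dots> = (\<Sum>k<p. a k * (\<Sum>j<n i p. X p i j \<omega> k - mu p i \<omega> k))"
      by (subst sum.swap) (simp add: sum_distrib_left)
    finally have "(\<Sum>r\<in>I. Y r \<omega>) / real (card I)
        = (\<Sum>k<p. a k * (\<Sum>j<n i p. X p i j \<omega> k - mu p i \<omega> k) / real (n i p))"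
      by (simp add: card_I sum_divide_distrib)
    then show "(\<Sum>r\<in>I. Y r \<omega>) / real (card I) = (\<Sum>k<p. a k * avg_noise i p \<omega> k)"
      by (simp add: avg_noise_def)
  qed
  moreover have "sqrt q / sqrt (card I) = sqrt (qf p (\<lambda>k l. Sig p k l / real (n i p)) a a)"
    by (simp add: qf_divide_matrix real_sqrt_divide card_I q_def)
  ultimately show "distributed (M p) lborel (\<lambda>\<omega>. \<Sum>k<p. a k * avg_noise i p \<omega> k)
      (normal_density (\<Sum>k<p. a k * 0) (sqrt (qf p (\<lambda>k l. Sig p k l / real (n i p)) a a)))"
    by simp
qed

text \<open>The six vectors whose pairings make up all quadratic forms: \<open>m\<^sub>0, m\<^sub>1, W\<^sub>0, W\<^sub>1, Z\<^sub>0, Z\<^sub>1\<close>;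
  component \<open>j\<close> belongs to class \<open>j mod 2\<close>.\<close>

definition component :: "nat \<Rightarrow> nat \<Rightarrow> 'a \<Rightarrow> nat \<Rightarrow> real" where
  "component j p \<omega> = (if j < 2 then m j p else if j < 4 then mean_dev (j - 2) p \<omega> else avg_noise (j - 4) p \<omega>)"

definition rate :: "nat \<Rightarrow> nat \<Rightarrow> real" where
  "rate j p = (if j < 4 then nu (j - 2) p else real (n (j - 4) p))"

definition m_limit :: "nat \<Rightarrow> nat \<Rightarrow> real" where
  "m_limit i j = lim (\<lambda>p. qf p (Sinv p) (m i p) (m j p))"

definition component_limit :: "nat \<Rightarrow> nat \<Rightarrow> real" where
  "component_limit i j = (if i < 2 \<and> j < 2 then m_limit i j
     else if i = j then (if i < 4 then J (i - 2) / gam (i - 2) else J (i - 4)) else 0)"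

lemma m_limit: "i < 2 \<Longrightarrow> j < 2 \<Longrightarrow> (\<lambda>p. qf p (Sinv p) (m i p) (m j p)) \<longlonglongrightarrow> m_limit i j"
  unfolding m_limit_def using m_conv by (simp add: convergent_LIMSEQ_iff)

lemma rate_tendsto: "2 \<le> j \<Longrightarrow> j < 6 \<Longrightarrow> filterlim (rate j) at_top sequentially"
  using nu_inf[of "j - 2"] n_tendsto[of "j - 4"] by (cases "j < 4") (simp_all add: rate_def[abs_def])

lemma p_over_rate_tendsto:
  assumes "2 \<le> j" "j < 6"
  shows "(\<lambda>p. real p / rate j p) \<longlonglongrightarrow> component_limit j j"
proof (cases "j < 4")
  case True
  define i where "i = j - 2"
  have i: "i < 2" using assms True by (simp add: i_def)
  have "(\<lambda>p. (real p / real (n i p)) / (nu i p / real (n i p))) \<longlonglongrightarrow> J i / gam i"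
    using gam_pos[OF i] by (intro tendsto_divide J_lim gam_lim i) auto
  moreover have "\<forall>\<^sub>F p in sequentially. (real p / real (n i p)) / (nu i p / real (n i p)) = real p / nu i p"
    using n_pos_eventually[OF i] by eventually_elim simp
  ultimately have "(\<lambda>p. real p / nu i p) \<longlonglongrightarrow> J i / gam i" by (rule Lim_transform_eventually)
  then show ?thesis using assms True by (simp add: rate_def component_limit_def i_def)
next
  case False
  then show ?thesis using assms J_lim[of "j - 4"] by (simp add: rate_def component_limit_def)
qed

definition gaussian_seq :: "(nat \<Rightarrow> 'a \<Rightarrow> nat \<Rightarrow> real) \<Rightarrow> (nat \<Rightarrow> real) \<Rightarrow> bool" where
  "gaussian_seq G t \<longleftrightarrow>
     (\<forall>\<^sub>F p in sequentially. scaled_gaussian (M p) p (G p) (\<lambda>k l. Sig p k l / t p) (Sig p) (Sinv p) (t p))"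

lemma scaled_gaussianI:
  assumes "mvn (M p) p Y (\<lambda>_. 0) (\<lambda>k l. Sig p k l / t)" "t > 0"
  shows "scaled_gaussian (M p) p Y (\<lambda>k l. Sig p k l / t) (Sig p) (Sinv p) t"
proof (intro scaled_gaussian.intro centered_gaussian.intro centered_gaussian_axioms.intro
    scaled_gaussian_axioms.intro inverse_matrices_Sig prob assms refl)
  show "\<And>k l. k < p \<Longrightarrow> l < p \<Longrightarrow> Sig p k l / t = Sig p l k / t" using Sig_sym by simp
  show "\<And>b. \<exists>k<p. b k \<noteq> 0 \<Longrightarrow> 0 < qf p (\<lambda>k l. Sig p k l / t) b b"
    using Sig_pd assms(2) by (simp add: qf_divide_matrix)
qed

lemma component_eq_mean_dev: "2 \<le> j \<Longrightarrow> j < 4 \<Longrightarrow> component j p = mean_dev (j - 2) p"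
  by (simp add: component_def fun_eq_iff)

lemma component_eq_avg_noise: "4 \<le> j \<Longrightarrow> component j p = avg_noise (j - 4) p"
  by (simp add: component_def fun_eq_iff)

lemma gaussian_seq_component:
  assumes "2 \<le> j" "j < 6"
  shows "gaussian_seq (component j) (rate j)"
proof -
  have "j - 4 < 2" using assms by simp
  from n_pos_eventually[OF this] show ?thesis
    unfolding gaussian_seq_def
  proof eventually_elim
    case (elim p)
    show ?case
    proof (cases "j < 4")
      case True
      then show ?thesis
        using assms by (auto intro!: scaled_gaussianI mvn_mean_dev nu_pos simp: component_eq_mean_dev rate_def)
    next
      case False
      then show ?thesis
        using assms elim by (auto intro!: scaled_gaussianI mvn_avg_noise simp: component_eq_avg_noise rate_def)
    qed
  qed
qed

lemma conv_in_prob_qf_fixed: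
  assumes G: "gaussian_seq G t" and t: "filterlim t at_top sequentially"
    and a: "convergent (\<lambda>p. qf p (Sinv p) (a p) (a p))"
  shows "conv_in_prob M (\<lambda>p \<omega>. qf p (Sinv p) (a p) (G p \<omega>)) 0"
proof (rule conv_in_prob_L2[where s="\<lambda>_. 0"])
  show "\<forall>\<^sub>F p in sequentially. (\<lambda>\<omega>. qf p (Sinv p) (a p) (G p \<omega>)) \<in> borel_measurable (M p)"
    using G unfolding gaussian_seq_def
    by eventually_elim (intro qf_measurable measurable_const centered_gaussian.measurable_component
        scaled_gaussian.axioms(1), auto)
  show "\<forall>\<^sub>F p in sequentially. integrable (M p) (\<lambda>\<omega>. (qf p (Sinv p) (a p) (G p \<omega>) - 0)^2)"
    using G unfolding gaussian_seq_def by eventually_elim (simp add: scaled_gaussian.qf_fixed_square(1))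
  have "(\<lambda>p. qf p (Sinv p) (a p) (a p) * (1 / t p)) \<longlonglongrightarrow> lim (\<lambda>p. qf p (Sinv p) (a p) (a p)) * 0"
    by (intro tendsto_mult tendsto_one_over_at_top t a[unfolded convergent_LIMSEQ_iff])
  moreover have "\<forall>\<^sub>F p in sequentially. qf p (Sinv p) (a p) (a p) * (1 / t p)
      = integral\<^sup>L (M p) (\<lambda>\<omega>. (qf p (Sinv p) (a p) (G p \<omega>) - 0)^2)"
    using G unfolding gaussian_seq_def by eventually_elim (simp add: scaled_gaussian.qf_fixed_square(2))
  ultimately show "(\<lambda>p. integral\<^sup>L (M p) (\<lambda>\<omega>. (qf p (Sinv p) (a p) (G p \<omega>) - 0)^2)) \<longlonglongrightarrow> 0"
    by (simp add: Lim_transform_eventually)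
qed simp

lemma conv_in_prob_qf_self:
  assumes G: "gaussian_seq G t" and t: "filterlim t at_top sequentially"
    and L: "(\<lambda>p. real p / t p) \<longlonglongrightarrow> L"
  shows "conv_in_prob M (\<lambda>p \<omega>. qf p (Sinv p) (G p \<omega>) (G p \<omega>)) L"
proof (rule conv_in_prob_L2[where s="\<lambda>p. real p / t p"])
  show "\<forall>\<^sub>F p in sequentially. (\<lambda>\<omega>. qf p (Sinv p) (G p \<omega>) (G p \<omega>)) \<in> borel_measurable (M p)"
    using G unfolding gaussian_seq_def
    by eventually_elim (intro qf_measurable centered_gaussian.measurable_component scaled_gaussian.axioms(1))
  show "\<forall>\<^sub>F p in sequentially. integrable (M p) (\<lambda>\<omega>. (qf p (Sinv p) (G p \<omega>) (G p \<omega>) - real p / t p)^2)"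
    using G unfolding gaussian_seq_def by eventually_elim (rule scaled_gaussian.qf_self_deviation(1))
  have "(\<lambda>p. 2 * (real p / t p) * (1 / t p)) \<longlonglongrightarrow> 2 * L * 0"
    by (intro tendsto_mult tendsto_one_over_at_top t L tendsto_const)
  moreover have "\<forall>\<^sub>F p in sequentially. 2 * (real p / t p) * (1 / t p)
      = integral\<^sup>L (M p) (\<lambda>\<omega>. (qf p (Sinv p) (G p \<omega>) (G p \<omega>) - real p / t p)^2)"
    using G unfolding gaussian_seq_def
    by eventually_elim (subst scaled_gaussian.qf_self_deviation(2), assumption, simp add: power2_eq_square)
  ultimately show "(\<lambda>p. integral\<^sup>L (M p) (\<lambda>\<omega>. (qf p (Sinv p) (G p \<omega>) (G p \<omega>) - real p / t p)^2)) \<longlonglongrightarrow> 0"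
    by (simp add: Lim_transform_eventually)
qed (rule L)

lemma conv_in_prob_qf_indep:
  assumes G: "gaussian_seq G t" and H: "gaussian_seq H s"
    and s: "filterlim s at_top sequentially" and L: "(\<lambda>p. real p / t p) \<longlonglongrightarrow> L"
    and indep: "\<forall>\<^sub>F p in sequentially. prob_space.indep_var (M p) (PB p) (G p) (PB p) (H p)"
  shows "conv_in_prob M (\<lambda>p \<omega>. qf p (Sinv p) (G p \<omega>) (H p \<omega>)) 0"
proof (rule conv_in_prob_L2[where s="\<lambda>_. 0"])
  note GH = eventually_conj[OF G[unfolded gaussian_seq_def] H[unfolded gaussian_seq_def]]
  show "\<forall>\<^sub>F p in sequentially. (\<lambda>\<omega>. qf p (Sinv p) (G p \<omega>) (H p \<omega>)) \<in> borel_measurable (M p)"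
    using GH
    by eventually_elim
      (intro qf_measurable centered_gaussian.measurable_component scaled_gaussian.axioms(1), auto)
  show "\<forall>\<^sub>F p in sequentially. integrable (M p) (\<lambda>\<omega>. (qf p (Sinv p) (G p \<omega>) (H p \<omega>) - 0)^2)"
    using eventually_conj[OF GH indep] by eventually_elim (elim conjE, simp add: qf_indep_square(1))
  have "(\<lambda>p. (real p / t p) * (1 / s p)) \<longlonglongrightarrow> L * 0"
    by (intro tendsto_mult tendsto_one_over_at_top s L)
  moreover have "\<forall>\<^sub>F p in sequentially. (real p / t p) * (1 / s p)
      = integral\<^sup>L (M p) (\<lambda>\<omega>. (qf p (Sinv p) (G p \<omega>) (H p \<omega>) - 0)^2)"
    using eventually_conj[OF GH indep] by eventually_elim (auto simp: qf_indep_square(2))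
  ultimately show "(\<lambda>p. integral\<^sup>L (M p) (\<lambda>\<omega>. (qf p (Sinv p) (G p \<omega>) (H p \<omega>) - 0)^2)) \<longlonglongrightarrow> 0"
    by (simp add: Lim_transform_eventually)
qed simp

text \<open>Distinct random components are functions of disjoint blocks of the independent family.\<close>

definition block :: "nat \<Rightarrow> nat \<Rightarrow> rvidx set" where
  "block j p = (if j < 4 then {MuI (j - 2)} else NoiseI (j - 4) ` {..<n (j - 4) p})"

definition block_map :: "nat \<Rightarrow> nat \<Rightarrow> (rvidx \<Rightarrow> nat \<Rightarrow> real) \<Rightarrow> nat \<Rightarrow> real" where
  "block_map j p f = (if j < 4 then restrict (\<lambda>k. f (MuI (j - 2)) k - m (j - 2) p k) {..<p}
     else restrict (\<lambda>k. (\<Sum>l<n (j - 4) p. f (NoiseI (j - 4) l) k) / real (n (j - 4) p)) {..<p})"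

lemma block_map_measurable: "block_map j p \<in> measurable (PiM (block j p) (\<lambda>_. PB p)) (PB p)"
proof -
  have coordinate: "a \<in> A \<Longrightarrow> k < p \<Longrightarrow> (\<lambda>f. f a k) \<in> borel_measurable (PiM A (\<lambda>_. PB p))" for a A k
    using measurable_compose[OF measurable_component_singleton[of a A "\<lambda>_. PB p"]
        measurable_component_singleton[of k "{..<p}" "\<lambda>_. borel"]]
    by simp
  show ?thesis
    unfolding block_map_def[abs_def] block_def
    by (cases "j < 4")
      (auto intro!: measurable_restrict borel_measurable_diff borel_measurable_divide borel_measurable_sum
        coordinate measurable_const)
qed

lemma component_eq_block_map:
  "2 \<le> j \<Longrightarrow> j < 6 \<Longrightarrow> component j p \<omega> = block_map j p (restrict (\<lambda>r. model_vectors p r \<omega>) (block j p))"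
  unfolding component_def block_map_def block_def
  by (auto simp: mean_dev_def avg_noise_def model_vectors_def intro!: ext sum.cong)

lemma indep_components:
  assumes "2 \<le> i" "i < 6" "2 \<le> j" "j < 6" "i \<noteq> j"
  shows "prob_space.indep_var (M p) (PB p) (component i p) (PB p) (component j p)"
proof -
  interpret prob_space "M p" by (rule prob)
  have "block i p \<inter> block j p = {}" "block i p \<subseteq> indices p" "block j p \<subseteq> indices p"
    using assms by (auto simp: block_def)
  from indep_var_restrict[OF indep[of p, folded model_vectors_def] this]
  have "indep_var (PB p) (block_map i p \<circ> (\<lambda>\<omega>. restrict (\<lambda>r. model_vectors p r \<omega>) (block i p)))
      (PB p) (block_map j p \<circ> (\<lambda>\<omega>. restrict (\<lambda>r. model_vectors p r \<omega>) (block j p)))"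
    by (rule indep_var_compose[OF _ block_map_measurable block_map_measurable])
  moreover have "component i p = block_map i p \<circ> (\<lambda>\<omega>. restrict (\<lambda>r. model_vectors p r \<omega>) (block i p))"
    "component j p = block_map j p \<circ> (\<lambda>\<omega>. restrict (\<lambda>r. model_vectors p r \<omega>) (block j p))"
    using assms by (auto simp: fun_eq_iff component_eq_block_map)
  ultimately show ?thesis by simp
qed

lemma conv_in_prob_qf_component:
  assumes i: "i < 6" and j: "j < 6"
  shows "conv_in_prob M (\<lambda>p \<omega>. qf p (Sinv p) (component i p \<omega>) (component j p \<omega>)) (component_limit i j)"
proof -
  have fixed: "conv_in_prob M (\<lambda>p \<omega>. qf p (Sinv p) (m a p) (component b p \<omega>)) 0"
    if "a < 2" "2 \<le> b" "b < 6" for a b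
    using that by (intro conv_in_prob_qf_fixed[where t="rate b"] gaussian_seq_component rate_tendsto m_conv) auto
  consider "i < 2" "j < 2" | "i < 2" "2 \<le> j" | "2 \<le> i" "j < 2" | "2 \<le> i" "2 \<le> j" "i = j"
    | "2 \<le> i" "2 \<le> j" "i \<noteq> j"
    by linarith
  then show ?thesis
  proof cases
    case 1
    then show ?thesis
      by (auto intro!: conv_in_prob_const m_limit simp: component_def component_limit_def)
  next
    case 2
    then show ?thesis using fixed[of i j] j by (simp add: component_def component_limit_def)
  next
    case 3
    then show ?thesis
      using fixed[of j i] i by (subst qf_Sinv_commute) (simp add: component_def component_limit_def)
  next
    case 4
    have "conv_in_prob M (\<lambda>p \<omega>. qf p (Sinv p) (component j p \<omega>) (component j p \<omega>)) (component_limit j j)"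
      using 4 j
      by (intro conv_in_prob_qf_self[where t="rate j"] gaussian_seq_component rate_tendsto p_over_rate_tendsto)
    then show ?thesis using 4 by simp
  next
    case 5
    then have "conv_in_prob M (\<lambda>p \<omega>. qf p (Sinv p) (component i p \<omega>) (component j p \<omega>)) 0"
      using i j by (intro conv_in_prob_qf_indep[where t="rate i" and s="rate j" and L="component_limit i i"] gaussian_seq_component rate_tendsto p_over_rate_tendsto
          always_eventually allI indep_components) auto
    then show ?thesis using 5 by (simp add: component_limit_def)
  qed
qed

section \<open>The quadratic forms of the LDA error as combinations of the components\<close>

abbreviation xbar :: "nat \<Rightarrow> nat \<Rightarrow> 'a \<Rightarrow> nat \<Rightarrow> real" where
  "xbar i p \<omega> \<equiv> smean (n i p) (\<lambda>j. X p i j \<omega>)"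

definition combo :: "(nat \<Rightarrow> real) \<Rightarrow> nat \<Rightarrow> 'a \<Rightarrow> nat \<Rightarrow> real" where
  "combo c p \<omega> = (\<lambda>k. \<Sum>j<6. c j * component j p \<omega> k)"

definition shrink :: "nat \<Rightarrow> nat \<Rightarrow> real" where
  "shrink i p = real (n i p) / (real (n i p) + nu i p)"

text \<open>Coefficients of \<open>x\<^sub>0 - x\<^sub>1\<close>, of \<open>\<mu>\<^sub>i - (x\<^sub>0 + x\<^sub>1)/2\<close> and of \<open>m\<^sub>i\<^sup>* - (x\<^sub>0 + x\<^sub>1)/2\<close> in the components,
  where \<open>m\<^sub>i\<^sup>* = m\<^sub>i + s (W\<^sub>i + Z\<^sub>i)\<close> with the shrinkage \<open>s = n\<^sub>i/(n\<^sub>i + \<nu>\<^sub>i)\<close>.\<close>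

definition coef_diff :: "nat \<Rightarrow> real" where
  "coef_diff j = (-1) ^ j"

definition coef_true :: "nat \<Rightarrow> nat \<Rightarrow> real" where
  "coef_true i j = (if j < 4 \<and> j mod 2 = i then 1/2 else -1/2)"

definition coef_bee :: "nat \<Rightarrow> real \<Rightarrow> nat \<Rightarrow> real" where
  "coef_bee i s j = (if j mod 2 = i then (if j < 2 then 1/2 else s - 1/2) else -1/2)"

lemma combo_eq: "combo c p \<omega> k = c 0 * m 0 p k + c 1 * m 1 p k + c 2 * mean_dev 0 p \<omega> k
    + c 3 * mean_dev 1 p \<omega> k + c 4 * avg_noise 0 p \<omega> k + c 5 * avg_noise 1 p \<omega> k"
  by (simp add: combo_def component_def eval_nat_numeral)

lemma xbar_decomp:
  "i < 2 \<Longrightarrow> 0 < n i p \<Longrightarrow> k < p \<Longrightarrow> xbar i p \<omega> k = m i p k + mean_dev i p \<omega> k + avg_noise i p \<omega> k"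
  by (simp add: smean_def mean_dev_def avg_noise_def sum_subtractf field_simps)

lemma diff_eq_combo:
  "0 < n 0 p \<Longrightarrow> 0 < n 1 p \<Longrightarrow> k < p \<Longrightarrow> xbar 0 p \<omega> k - xbar 1 p \<omega> k = combo coef_diff p \<omega> k"
  by (simp add: combo_eq xbar_decomp coef_diff_def)

lemma true_eq_combo:
  assumes "i < 2" "0 < n 0 p" "0 < n 1 p" "k < p"
  shows "mu p i \<omega> k - (xbar 0 p \<omega> k + xbar 1 p \<omega> k) / 2 = combo (coef_true i) p \<omega> k"
proof -
  have mu: "mu p i \<omega> k = m i p k + mean_dev i p \<omega> k" using assms(4) by (simp add: mean_dev_def)
  consider "i = 0" | "i = 1" using assms(1) by linarith
  then show ?thesis
    using assms mu by cases (simp_all add: combo_eq xbar_decomp coef_true_def field_simps)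
qed

lemma bee_eq_combo:
  assumes "i < 2" "0 < n 0 p" "0 < n 1 p" "k < p"
  shows "(real (n i p) * xbar i p \<omega> k + nu i p * m i p k) / (real (n i p) + nu i p)
      - (xbar 0 p \<omega> k + xbar 1 p \<omega> k) / 2 = combo (coef_bee i (shrink i p)) p \<omega> k"
proof -
  have "0 < n i p" using assms(1-3) by (auto simp: less_2_cases_iff)
  moreover have "real (n i p) + nu i p \<noteq> 0" using nu_pos[OF assms(1), of p] by simp
  ultimately have mstar: "(real (n i p) * xbar i p \<omega> k + nu i p * m i p k) / (real (n i p) + nu i p)
      = m i p k + shrink i p * (mean_dev i p \<omega> k + avg_noise i p \<omega> k)"
    using assms by (simp add: xbar_decomp shrink_def field_simps)
  consider "i = 0" | "i = 1" using assms(1) by linarith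
  then show ?thesis
    using assms mstar by cases (simp_all add: combo_eq xbar_decomp coef_bee_def field_simps)
qed

lemma shrink_tendsto: "i < 2 \<Longrightarrow> shrink i \<longlonglongrightarrow> 1 / (1 + gam i)"
proof -
  assume i: "i < 2"
  have "(\<lambda>p. 1 / (1 + nu i p / real (n i p))) \<longlonglongrightarrow> 1 / (1 + gam i)"
    using gam_pos[OF i] by (intro tendsto_divide tendsto_add tendsto_const gam_lim i) auto
  moreover have "\<forall>\<^sub>F p in sequentially. 1 / (1 + nu i p / real (n i p)) = shrink i p"
    using n_pos_eventually[OF i] by eventually_elim (simp add: shrink_def field_simps)
  ultimately show ?thesis by (rule Lim_transform_eventually)
qed

lemma conv_in_prob_qf_combo:
  assumes "\<And>j. j < 6 \<Longrightarrow> (\<lambda>p. c p j) \<longlonglongrightarrow> \<alpha> j" and "\<And>j. j < 6 \<Longrightarrow> (\<lambda>p. d p j) \<longlonglongrightarrow> \<beta> j"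
  shows "conv_in_prob M (\<lambda>p \<omega>. qf p (Sinv p) (combo (c p) p \<omega>) (combo (d p) p \<omega>))
           (\<Sum>i<6. \<Sum>j<6. \<alpha> i * \<beta> j * component_limit i j)"
  unfolding combo_def qf_sum_sum by (rule conv_in_prob_bilinear[OF conv_in_prob_qf_component assms])

lemma Dbar2_eq: "Dbar2 = m_limit 0 0 - m_limit 0 1 - m_limit 1 0 + m_limit 1 1"
proof -
  have "(\<lambda>p. qf p (Sinv p) (\<lambda>k. m 0 p k - m 1 p k) (\<lambda>k. m 0 p k - m 1 p k))
      \<longlonglongrightarrow> m_limit 0 0 - m_limit 0 1 - (m_limit 1 0 - m_limit 1 1)"
    unfolding qf_diff_left qf_diff_right by (intro tendsto_diff m_limit) auto
  from LIMSEQ_unique[OF Dbar this] show ?thesis by simp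
qed

abbreviation F :: real where
  "F \<equiv> Dbar2 + J 0 + J 1 + J 0 / gam 0 + J 1 / gam 1"

lemma sum_component_limit: "(\<Sum>i<6. \<Sum>j<6. \<alpha> i * \<beta> j * component_limit i j) =
   \<alpha> 0 * \<beta> 0 * m_limit 0 0 + \<alpha> 0 * \<beta> 1 * m_limit 0 1 + \<alpha> 1 * \<beta> 0 * m_limit 1 0
   + \<alpha> 1 * \<beta> 1 * m_limit 1 1 + \<alpha> 2 * \<beta> 2 * (J 0 / gam 0) + \<alpha> 3 * \<beta> 3 * (J 1 / gam 1)
   + \<alpha> 4 * \<beta> 4 * J 0 + \<alpha> 5 * \<beta> 5 * J 1"
  by (simp add: eval_nat_numeral component_limit_def)

lemma limit_delta2: "(\<Sum>i<6. \<Sum>j<6. coef_diff i * coef_diff j * component_limit i j) = F"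
  unfolding sum_component_limit by (simp add: coef_diff_def Dbar2_eq)

lemma limit_true: "i < 2 \<Longrightarrow>
    (\<Sum>a<6. \<Sum>b<6. coef_true i a * coef_diff b * component_limit a b) = (-1) ^ i * (F / 2 - J i)"
  unfolding sum_component_limit
  by (auto simp: less_2_cases_iff coef_true_def coef_diff_def Dbar2_eq field_simps)

lemma shrinkage_identity:
  fixes g j :: real
  assumes g: "g > 0"
  shows "(1 / (1 + g) - 1/2) * (j / g) + (1 / (1 + g) - 1/2) * j = j / g / 2 - j / 2"
proof -
  have split: "(s - 1/2) * a + (s - 1/2) * b = s * (a + b) - (a + b) / 2" for s a b :: real
    by (simp add: algebra_simps)
  have "j / g + j = (1 + g) * j / g" using g by (simp add: field_simps)
  then have "1 / (1 + g) * (j / g + j) = j / g" using g by simp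
  then show ?thesis unfolding split by (simp add: field_simps)
qed

lemma limit_bee:
  assumes i: "i < 2"
  shows "(\<Sum>a<6. \<Sum>b<6. coef_bee i (1 / (1 + gam i)) a * coef_diff b * component_limit a b)
    = (-1) ^ i * (F / 2 - J i)"
proof -
  define s where "s = 1 / (1 + gam i)"
  have "(\<Sum>a<6. \<Sum>b<6. coef_bee i s a * coef_diff b * component_limit a b) = (-1) ^ i *
      (Dbar2 / 2 + ((s - 1/2) * (J i / gam i) + (s - 1/2) * J i) + J (1 - i) / gam (1 - i) / 2 + J (1 - i) / 2)"
    unfolding sum_component_limit using i gam_pos[of 0] gam_pos[of 1]
    by (auto simp: less_2_cases_iff coef_bee_def coef_diff_def Dbar2_eq field_simps)
  also have "\<dots> = (-1) ^ i * (F / 2 - J i)"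
    unfolding s_def shrinkage_identity[OF gam_pos[OF i]]
    using i by (auto simp: less_2_cases_iff field_simps)
  finally show ?thesis unfolding s_def .
qed

lemma conv_in_prob_cong_combo:
  assumes "conv_in_prob M (\<lambda>p \<omega>. qf p (Sinv p) (combo (c p) p \<omega>) (combo coef_diff p \<omega>)) L"
    and "\<And>p \<omega> k. 0 < n 0 p \<Longrightarrow> 0 < n 1 p \<Longrightarrow> k < p \<Longrightarrow> x p \<omega> k = combo (c p) p \<omega> k"
  shows "conv_in_prob M (\<lambda>p \<omega>. qf p (Sinv p) (x p \<omega>) (\<lambda>k. xbar 0 p \<omega> k - xbar 1 p \<omega> k)) L"
  using assms(1)
proof (rule conv_in_prob_cong)
  show "\<forall>\<^sub>F p in sequentially. \<forall>\<omega>\<in>space (M p). qf p (Sinv p) (combo (c p) p \<omega>) (combo coef_diff p \<omega>)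
      = qf p (Sinv p) (x p \<omega>) (\<lambda>k. xbar 0 p \<omega> k - xbar 1 p \<omega> k)"
    using n01_pos_eventually
  proof eventually_elim
    case (elim p)
    then have n0: "0 < n 0 p" and n1: "0 < n 1 p" by auto
    show ?case
      by (intro ballI qf_cong) (simp_all only: assms(2)[OF n0 n1] diff_eq_combo[OF n0 n1])
  qed
qed

lemma conv_in_prob_delta2:
  "conv_in_prob M (\<lambda>p \<omega>. qf p (Sinv p) (\<lambda>k. xbar 0 p \<omega> k - xbar 1 p \<omega> k) (\<lambda>k. xbar 0 p \<omega> k - xbar 1 p \<omega> k)) F"
proof (rule conv_in_prob_cong_combo[where c="\<lambda>_. coef_diff"])
  show "conv_in_prob M (\<lambda>p \<omega>. qf p (Sinv p) (combo coef_diff p \<omega>) (combo coef_diff p \<omega>)) F"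
    unfolding limit_delta2[symmetric] by (rule conv_in_prob_qf_combo) auto
qed (rule diff_eq_combo)

lemma conv_in_prob_num_true:
  assumes i: "i < 2"
  shows "conv_in_prob M (\<lambda>p \<omega>. qf p (Sinv p) (\<lambda>k. mu p i \<omega> k - (xbar 0 p \<omega> k + xbar 1 p \<omega> k) / 2)
           (\<lambda>k. xbar 0 p \<omega> k - xbar 1 p \<omega> k)) ((-1) ^ i * (F / 2 - J i))"
proof (rule conv_in_prob_cong_combo[where c="\<lambda>_. coef_true i"])
  show "conv_in_prob M (\<lambda>p \<omega>. qf p (Sinv p) (combo (coef_true i) p \<omega>) (combo coef_diff p \<omega>))
      ((-1) ^ i * (F / 2 - J i))"
    unfolding limit_true[OF i, symmetric] by (rule conv_in_prob_qf_combo) auto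
qed (rule true_eq_combo[OF i])

lemma conv_in_prob_num_bee:
  assumes i: "i < 2"
  shows "conv_in_prob M (\<lambda>p \<omega>. qf p (Sinv p) (\<lambda>k. (real (n i p) * xbar i p \<omega> k + nu i p * m i p k)
      / (real (n i p) + nu i p) - (xbar 0 p \<omega> k + xbar 1 p \<omega> k) / 2)
      (\<lambda>k. xbar 0 p \<omega> k - xbar 1 p \<omega> k)) ((-1) ^ i * (F / 2 - J i))"
proof (rule conv_in_prob_cong_combo[where c="\<lambda>p. coef_bee i (shrink i p)"])
  have "(\<lambda>p. coef_bee i (shrink i p) j) \<longlonglongrightarrow> coef_bee i (1 / (1 + gam i)) j" for j
    unfolding coef_bee_def using shrink_tendsto[OF i] by (auto intro!: tendsto_diff)
  then show "conv_in_prob M (\<lambda>p \<omega>. qf p (Sinv p) (combo (coef_bee i (shrink i p)) p \<omega>)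
      (combo coef_diff p \<omega>)) ((-1) ^ i * (F / 2 - J i))"
    unfolding limit_bee[OF i, symmetric] by (intro conv_in_prob_qf_combo) auto
qed (rule bee_eq_combo[OF i])

section \<open>Convergence of the true error and of the Bayesian error estimator\<close>

abbreviation threshold :: real where
  "threshold \<equiv> ln ((1 - a0) / a0)"

definition class_limit :: "nat \<Rightarrow> real" where
  "class_limit i = Phi ((- (F / 2 - J i) + (-1) ^ i * threshold) / sqrt F)"

abbreviation err_limit :: real where
  "err_limit \<equiv> a0 * class_limit 0 + (1 - a0) * class_limit 1"

abbreviation err :: "nat \<Rightarrow> 'a \<Rightarrow> real" where
  "err p \<omega> \<equiv> true_err p (Sinv p) a0 (mu p 0 \<omega>) (mu p 1 \<omega>) (xbar 0 p \<omega>) (xbar 1 p \<omega>)"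

abbreviation errB :: "nat \<Rightarrow> 'a \<Rightarrow> real" where
  "errB p \<omega> \<equiv> bee p (Sinv p) a0 (n 0 p) (n 1 p) (nu 0 p) (nu 1 p) (m 0 p) (m 1 p) (xbar 0 p \<omega>) (xbar 1 p \<omega>)"

lemma conv_in_prob_sqrt_delta2:
  "conv_in_prob M (\<lambda>p \<omega>. sqrt (qf p (Sinv p) (\<lambda>k. xbar 0 p \<omega> k - xbar 1 p \<omega> k)
     (\<lambda>k. xbar 0 p \<omega> k - xbar 1 p \<omega> k))) (sqrt F)"
  by (rule conv_in_prob_continuous[OF conv_in_prob_delta2 isCont_real_sqrt])

lemma posterior_factor_tendsto:
  assumes i: "i < 2"
  shows "(\<lambda>p. sqrt ((real (n i p) + nu i p) / (real (n i p) + nu i p + 1))) \<longlonglongrightarrow> 1"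
proof -
  define w where "w = (\<lambda>p. real (n i p) + nu i p)"
  have w_pos: "w p > 0" for p using nu_pos[OF i, of p] by (simp add: w_def add_nonneg_pos)
  have w_tendsto: "filterlim w at_top sequentially"
    unfolding w_def by (rule filterlim_at_top_add_at_top[OF n_tendsto[OF i] nu_inf[OF i]])
  have "filterlim (\<lambda>p. w p + 1) at_top sequentially"
    using filterlim_tendsto_add_at_top[OF tendsto_const w_tendsto, of 1] by (simp add: add.commute)
  then have "(\<lambda>p. 1 - 1 / (w p + 1)) \<longlonglongrightarrow> 1 - 0"
    by (intro tendsto_diff tendsto_const tendsto_one_over_at_top)
  moreover have "1 - 1 / (w p + 1) = w p / (w p + 1)" for p
    using w_pos[of p] by (simp add: field_simps)
  ultimately have "(\<lambda>p. w p / (w p + 1)) \<longlonglongrightarrow> 1" by simp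
  from tendsto_real_sqrt[OF this] show ?thesis by (simp add: w_def)
qed

lemma conv_in_prob_true_err_i:
  assumes i: "i < 2"
  shows "conv_in_prob M (\<lambda>p \<omega>. true_err_i p (Sinv p) threshold i (mu p i \<omega>) (xbar 0 p \<omega>) (xbar 1 p \<omega>))
           (class_limit i)"
proof -
  have "sqrt F \<noteq> 0" using F_pos by simp
  then have "conv_in_prob M (\<lambda>p \<omega>. true_err_i p (Sinv p) threshold i (mu p i \<omega>) (xbar 0 p \<omega>) (xbar 1 p \<omega>))
      (Phi (((-1) ^ (i + 1) * ((-1) ^ i * (F / 2 - J i)) + (-1) ^ i * threshold) / sqrt F))"
    unfolding true_err_i_def
    by (intro conv_in_prob_continuous[OF _ isCont_Phi] conv_in_prob_divide conv_in_prob_add conv_in_prob_mult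
        conv_in_prob_constant conv_in_prob_num_true[OF i] conv_in_prob_sqrt_delta2)
  then show ?thesis unfolding class_limit_def neg_one_power_Suc_cancel .
qed

lemma conv_in_prob_bee_i:
  assumes i: "i < 2"
  shows "conv_in_prob M (\<lambda>p \<omega>. bee_i p (Sinv p) threshold i (n i p) (nu i p) (m i p)
           (xbar i p \<omega>) (xbar 0 p \<omega>) (xbar 1 p \<omega>)) (class_limit i)"
proof -
  have "sqrt F \<noteq> 0" using F_pos by simp
  from conv_in_prob_continuous[OF conv_in_prob_mult[OF conv_in_prob_mult[OF conv_in_prob_constant
        conv_in_prob_divide[OF conv_in_prob_add[OF conv_in_prob_minus[OF conv_in_prob_num_bee[OF i]]
          conv_in_prob_constant] conv_in_prob_sqrt_delta2 this]]
        conv_in_prob_const[OF posterior_factor_tendsto[OF i]]] isCont_Phi]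
  have "conv_in_prob M (\<lambda>p \<omega>. bee_i p (Sinv p) threshold i (n i p) (nu i p) (m i p)
      (xbar i p \<omega>) (xbar 0 p \<omega>) (xbar 1 p \<omega>))
      (Phi ((-1) ^ i * ((- ((-1) ^ i * (F / 2 - J i)) + threshold) / sqrt F) * 1))"
    unfolding bee_i_def Let_def .
  then show ?thesis unfolding class_limit_def neg_one_power_cancel .
qed

lemma conv_in_prob_err: "conv_in_prob M err err_limit"
proof -
  have "(0::nat) < 2" "(1::nat) < 2" by simp_all
  from conv_in_prob_add[OF conv_in_prob_mult[OF conv_in_prob_constant conv_in_prob_true_err_i[OF this(1)]]
      conv_in_prob_mult[OF conv_in_prob_constant conv_in_prob_true_err_i[OF this(2)]]]
  show ?thesis unfolding true_err_def Let_def .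
qed

lemma conv_in_prob_errB: "conv_in_prob M errB err_limit"
proof -
  have "(0::nat) < 2" "(1::nat) < 2" by simp_all
  from conv_in_prob_add[OF conv_in_prob_mult[OF conv_in_prob_constant conv_in_prob_bee_i[OF this(1)]]
      conv_in_prob_mult[OF conv_in_prob_constant conv_in_prob_bee_i[OF this(2)]]]
  show ?thesis unfolding bee_def Let_def .
qed

lemma xbar_component_measurable: "i < 2 \<Longrightarrow> k < p \<Longrightarrow> (\<lambda>\<omega>. xbar i p \<omega> k) \<in> borel_measurable (M p)"
  unfolding smean_def
  by (intro borel_measurable_divide borel_measurable_sum measurable_const X_component_measurable) auto

lemma err_measurable: "err p \<in> borel_measurable (M p)"
  unfolding true_err_def true_err_i_def Let_def
  by (intro borel_measurable_add borel_measurable_times measurable_const borel_measurable_divide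
      measurable_compose[OF _ Phi_measurable] measurable_compose[OF _ borel_measurable_sqrt]
      qf_measurable borel_measurable_diff xbar_component_measurable mu_component_measurable) auto

lemma errB_measurable: "errB p \<in> borel_measurable (M p)"
  unfolding bee_def bee_i_def Let_def
  by (intro borel_measurable_add borel_measurable_times measurable_const borel_measurable_divide
      measurable_compose[OF _ Phi_measurable] measurable_compose[OF _ borel_measurable_sqrt]
      qf_measurable borel_measurable_diff borel_measurable_uminus xbar_component_measurable) auto

lemma err_near_limit: "\<bar>err p \<omega> - err_limit\<bar> \<le> 1"
proof -
  have "0 \<le> err p \<omega> \<and> err p \<omega> \<le> 1"
    unfolding true_err_def Let_def using a0
    by (intro convex_combination_unit_interval) (simp_all add: true_err_i_def Phi_bounds)
  moreover have "0 \<le> err_limit \<and> err_limit \<le> 1"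
    using a0 by (intro convex_combination_unit_interval) (simp_all add: class_limit_def Phi_bounds)
  ultimately show ?thesis by linarith
qed

lemma errB_near_limit: "\<bar>errB p \<omega> - err_limit\<bar> \<le> 1"
proof -
  have "0 \<le> errB p \<omega> \<and> errB p \<omega> \<le> 1"
    unfolding bee_def Let_def using a0
    by (intro convex_combination_unit_interval) (simp_all add: bee_i_def Let_def Phi_bounds)
  moreover have "0 \<le> err_limit \<and> err_limit \<le> 1"
    using a0 by (intro convex_combination_unit_interval) (simp_all add: class_limit_def Phi_bounds)
  ultimately show ?thesis by linarith
qed

lemma L2_err: "(\<lambda>p. integral\<^sup>L (M p) (\<lambda>\<omega>. (err p \<omega> - err_limit)^2)) \<longlonglongrightarrow> 0"
  by (rule L2_of_bounded_conv_in_prob[OF err_measurable err_near_limit conv_in_prob_err])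

lemma L2_errB: "(\<lambda>p. integral\<^sup>L (M p) (\<lambda>\<omega>. (errB p \<omega> - err_limit)^2)) \<longlonglongrightarrow> 0"
  by (rule L2_of_bounded_conv_in_prob[OF errB_measurable errB_near_limit conv_in_prob_errB])

end

theorem mainTheorem7:
  fixes a0 :: real
    and M :: "nat \<Rightarrow> 'a measure"
    and Sig Sinv :: "nat \<Rightarrow> nat \<Rightarrow> nat \<Rightarrow> real"
    and n :: "nat \<Rightarrow> nat \<Rightarrow> nat"
    and nu :: "nat \<Rightarrow> nat \<Rightarrow> real"
    and m :: "nat \<Rightarrow> nat \<Rightarrow> nat \<Rightarrow> real"
    and mu :: "nat \<Rightarrow> nat \<Rightarrow> 'a \<Rightarrow> nat \<Rightarrow> real"
    and X :: "nat \<Rightarrow> nat \<Rightarrow> nat \<Rightarrow> 'a \<Rightarrow> nat \<Rightarrow> real"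
    and J gam :: "nat \<Rightarrow> real"
    and Dbar2 :: real
  assumes a0: "0 < a0" "a0 < 1"
    and Sig_sym: "\<And>p k l. k < p \<Longrightarrow> l < p \<Longrightarrow> Sig p k l = Sig p l k"
    and Sig_pd: "\<And>p x. (\<exists>k<p. x k \<noteq> 0) \<Longrightarrow> qf p (Sig p) x x > 0"
    and Sinv_r: "\<And>p k l. k < p \<Longrightarrow> l < p \<Longrightarrow>
                   (\<Sum>j<p. Sig p k j * Sinv p j l) = (if k = l then 1 else 0)"
    and Sinv_l: "\<And>p k l. k < p \<Longrightarrow> l < p \<Longrightarrow>
                   (\<Sum>j<p. Sinv p k j * Sig p j l) = (if k = l then 1 else 0)"
    and nu_pos: "\<And>i p. i < 2 \<Longrightarrow> nu i p > 0"
    and prob: "\<And>p. prob_space (M p)"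
    and mu_law: "\<And>i p. i < 2 \<Longrightarrow>
                   mvn (M p) p (mu p i) (m i p) (\<lambda>k l. Sig p k l / nu i p)"
    and noise_law: "\<And>i j p. i < 2 \<Longrightarrow> j < n i p \<Longrightarrow>
                   mvn (M p) p (\<lambda>\<omega>. restrict (\<lambda>k. X p i j \<omega> k - mu p i \<omega> k) {..<p}) (\<lambda>_. 0) (Sig p)"
    and indep: "\<And>p. prob_space.indep_vars (M p) (\<lambda>_. PiM {..<p} (\<lambda>_. borel))
                   (\<lambda>r \<omega>. case r of MuI i \<Rightarrow> mu p i \<omega>
                     | NoiseI i j \<Rightarrow> restrict (\<lambda>k. X p i j \<omega> k - mu p i \<omega> k) {..<p})
                   ({MuI 0, MuI 1} \<union> {NoiseI i j | i j. i < 2 \<and> j < n i p})"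
    and n_inf: "\<And>i. i < 2 \<Longrightarrow> filterlim (\<lambda>p. n i p) at_top sequentially"
    and nu_inf: "\<And>i. i < 2 \<Longrightarrow> filterlim (\<lambda>p. nu i p) at_top sequentially"
    and J_lim: "\<And>i. i < 2 \<Longrightarrow> (\<lambda>p. real p / real (n i p)) \<longlonglongrightarrow> J i"
    and J_nonneg: "\<And>i. i < 2 \<Longrightarrow> 0 \<le> J i"
    and gam_lim: "\<And>i. i < 2 \<Longrightarrow> (\<lambda>p. nu i p / real (n i p)) \<longlonglongrightarrow> gam i"
    and gam_pos: "\<And>i. i < 2 \<Longrightarrow> 0 < gam i"
    and m_conv: "\<And>i j. i < 2 \<Longrightarrow> j < 2 \<Longrightarrow> convergent (\<lambda>p. qf p (Sinv p) (m i p) (m j p))"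
    and Dbar: "(\<lambda>p. qf p (Sinv p) (\<lambda>k. m 0 p k - m 1 p k) (\<lambda>k. m 0 p k - m 1 p k)) \<longlonglongrightarrow> Dbar2"
    and F_pos: "Dbar2 + J 0 + J 1 + J 0 / gam 0 + J 1 / gam 1 > 0"
  defines "eps \<equiv> \<lambda>p \<omega>. true_err p (Sinv p) a0 (mu p 0 \<omega>) (mu p 1 \<omega>)
                      (smean (n 0 p) (\<lambda>j. X p 0 j \<omega>)) (smean (n 1 p) (\<lambda>j. X p 1 j \<omega>))"
    and "epsB \<equiv> \<lambda>p \<omega>. bee p (Sinv p) a0 (n 0 p) (n 1 p) (nu 0 p) (nu 1 p) (m 0 p) (m 1 p)
                      (smean (n 0 p) (\<lambda>j. X p 0 j \<omega>)) (smean (n 1 p) (\<lambda>j. X p 1 j \<omega>))"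
  shows "((\<lambda>p. prob_space.variance (M p) (epsB p)) \<longlonglongrightarrow> 0)
     \<and> ((\<lambda>p. prob_space.variance (M p) (eps p)) \<longlonglongrightarrow> 0)
     \<and> ((\<lambda>p. covariance (M p) (eps p) (epsB p)) \<longlonglongrightarrow> 0)
     \<and> ((\<lambda>p. prob_space.variance (M p) (\<lambda>\<omega>. epsB p \<omega> - eps p \<omega>)) \<longlonglongrightarrow> 0)
     \<and> ((\<lambda>p. \<bar>prob_space.expectation (M p) (\<lambda>\<omega>. epsB p \<omega> - eps p \<omega>)\<bar>) \<longlonglongrightarrow> 0)
     \<and> ((\<lambda>p. sqrt (prob_space.expectation (M p) (\<lambda>\<omega>. (eps p \<omega> - epsB p \<omega>)\<^sup>2))) \<longlonglongrightarrow> 0)"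
proof -
  interpret lda_model a0 M Sig Sinv n nu m mu X J gam Dbar2
    by (rule lda_model.intro) (fact assms)+
  show ?thesis
    unfolding eps_def epsB_def
    by (rule moment_limits_of_L2_convergence[OF prob err_measurable errB_measurable
          err_near_limit errB_near_limit L2_err L2_errB])
qed

end
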